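(* Let $A$ be a primitive axial algebra of Jordan type $\eta$, and let $\mathcal A$ be a set of $\eta$-axes generating $A$ such that the graph $\Delta_{\mathcal A}$ is connected. Suppose there are distinct $a,b\in\mathcal A$ with $\tau(a)=\tau(b)\ne\mathrm{id}$. Then $\eta=\tfrac12$, $a+b$ is the identity element of $A$, and $A$ is a Jordan algebra of Clifford type, i.e. $A\cong J(V,B)$ for some $\mathbb F$-vector space $V$ with symmetric bilinear form $B$.
   Context: Throughout, $\mathbb F$ is a field of characteristic $\neq 2$ and $\eta\in\mathbb F\setminus\{0,1\}$. Let $A$ be a commutative, not necessarily associative $\mathbb F$-algebra. For $a\in A$ and $\lambda\in\mathbb F$ put $A_\lambda(a)=\{x\in A: xa=\lambda x\}$. An $\eta$-axis of $A$ is an element $a$ with $a^2=a$ such that $A=A_1(a)\oplus A_0(a)\oplus A_\eta(a)$, $A_1(a)=\mathbb F a$, and, writing $A_+(a)=A_1(a)\oplus A_0(a)$ and $A_-(a)=A_\eta(a)$, one has $A_+(a)A_+(a)\subseteq A_+(a)$, $A_+(a)A_-(a)\subseteq A_-(a)$, $A_-(a)A_-(a)\subseteq A_+(a)$ and $A_0(a)A_0(a)\subseteq A_0(a)$. $A$ is a primitive axial algebra of Jordan type $\eta$ if it is generated as an algebra by $\eta$-axes. For an $\eta$-axis $a$, the Miyamoto involution $\tau(a)$ is the automorphism of $A$ acting as the identity on $A_+(a)$ and as $-1$ on $A_-(a)$. For a set $\mathcal B$ of $\eta$-axes, $\Delta_{\mathcal B}$ is the graph with vertex set $\mathcal B$ in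 which distinct $x,y$ are adjacent iff $xy\neq 0$. For a symmetric bilinear form $B$ on an $\mathbb F$-vector space $V$, $J(V,B)$ is the algebra $\mathbb F\mathbf e\oplus V$ with product $(\alpha\mathbf e+u)(\beta\mathbf e+v)=(\alpha\beta+B(u,v))\mathbf e+\alpha v+\beta u$. *)

theory Defs
  imports Complex_Main
begin

definition comm_algebra :: "('f::field \<Rightarrow> 'v::ab_group_add \<Rightarrow> 'v) \<Rightarrow> ('v \<Rightarrow> 'v \<Rightarrow> 'v) \<Rightarrow> bool" where
  "comm_algebra sc m \<longleftrightarrow> vector_space sc
     \<and> (\<forall>x y. m x y = m y x)
     \<and> (\<forall>x y z. m (x + y) z = m x z + m y z)
     \<and> (\<forall>c x y. m (sc c x) y = sc c (m x y))"

definition eigsp :: "('f \<Rightarrow> 'v \<Rightarrow> 'v) \<Rightarrow> ('v \<Rightarrow> 'v \<Rightarrow> 'v) \<Rightarrow> 'v \<Rightarrow> 'f \<Rightarrow> 'v set" where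
  "eigsp sc m a t = {x. m x a = sc t x}"

definition Aplus :: "('f::field \<Rightarrow> 'v::ab_group_add \<Rightarrow> 'v) \<Rightarrow> ('v \<Rightarrow> 'v \<Rightarrow> 'v) \<Rightarrow> 'v \<Rightarrow> 'v set" where
  "Aplus sc m a = {u + v | u v. u \<in> eigsp sc m a 1 \<and> v \<in> eigsp sc m a 0}"

definition Aminus :: "('f::field \<Rightarrow> 'v::ab_group_add \<Rightarrow> 'v) \<Rightarrow> ('v \<Rightarrow> 'v \<Rightarrow> 'v) \<Rightarrow> 'f \<Rightarrow> 'v \<Rightarrow> 'v set" where
  "Aminus sc m \<eta> a = eigsp sc m a \<eta>"

definition prod_in :: "('v \<Rightarrow> 'v \<Rightarrow> 'v) \<Rightarrow> 'v set \<Rightarrow> 'v set \<Rightarrow> 'v set \<Rightarrow> bool" where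
  "prod_in m X Y Z \<longleftrightarrow> (\<forall>x\<in>X. \<forall>y\<in>Y. m x y \<in> Z)"

definition is_axis :: "('f::field \<Rightarrow> 'v::ab_group_add \<Rightarrow> 'v) \<Rightarrow> ('v \<Rightarrow> 'v \<Rightarrow> 'v) \<Rightarrow> 'f \<Rightarrow> 'v \<Rightarrow> bool" where
  "is_axis sc m \<eta> a \<longleftrightarrow>
     m a a = a
     \<and> (\<forall>x. \<exists>!t. fst t \<in> eigsp sc m a 1 \<and> fst (snd t) \<in> eigsp sc m a 0
                 \<and> snd (snd t) \<in> eigsp sc m a \<eta> \<and> x = fst t + fst (snd t) + snd (snd t))
     \<and> eigsp sc m a 1 = range (\<lambda>c. sc c a)
     \<and> prod_in m (Aplus sc m a) (Aplus sc m a) (Aplus sc m a)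
     \<and> prod_in m (Aplus sc m a) (Aminus sc m \<eta> a) (Aminus sc m \<eta> a)
     \<and> prod_in m (Aminus sc m \<eta> a) (Aminus sc m \<eta> a) (Aplus sc m a)
     \<and> prod_in m (eigsp sc m a 0) (eigsp sc m a 0) (eigsp sc m a 0)"

definition miyamoto :: "('f::field \<Rightarrow> 'v::ab_group_add \<Rightarrow> 'v) \<Rightarrow> ('v \<Rightarrow> 'v \<Rightarrow> 'v) \<Rightarrow> 'f \<Rightarrow> 'v \<Rightarrow> 'v \<Rightarrow> 'v" where
  "miyamoto sc m \<eta> a x = (THE y. \<exists>u v. u \<in> Aplus sc m a \<and> v \<in> Aminus sc m \<eta> a \<and> x = u + v \<and> y = u - v)"

definition subalgebra :: "('f \<Rightarrow> 'v::ab_group_add \<Rightarrow> 'v) \<Rightarrow> ('v \<Rightarrow> 'v \<Rightarrow> 'v) \<Rightarrow> 'v set \<Rightarrow> bool" where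
  "subalgebra sc m S \<longleftrightarrow> 0 \<in> S \<and> (\<forall>x\<in>S. \<forall>y\<in>S. x + y \<in> S \<and> m x y \<in> S) \<and> (\<forall>c. \<forall>x\<in>S. sc c x \<in> S)"

definition generated :: "('f \<Rightarrow> 'v::ab_group_add \<Rightarrow> 'v) \<Rightarrow> ('v \<Rightarrow> 'v \<Rightarrow> 'v) \<Rightarrow> 'v set \<Rightarrow> 'v set" where
  "generated sc m X = \<Inter> {S. subalgebra sc m S \<and> X \<subseteq> S}"

definition primitive_axial_jordan :: "('f::field \<Rightarrow> 'v::ab_group_add \<Rightarrow> 'v) \<Rightarrow> ('v \<Rightarrow> 'v \<Rightarrow> 'v) \<Rightarrow> 'f \<Rightarrow> bool" where
  "primitive_axial_jordan sc m \<eta> \<longleftrightarrow> comm_algebra sc m \<and> generated sc m {a. is_axis sc m \<eta> a} = UNIV"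

definition delta_connected :: "('v::zero \<Rightarrow> 'v \<Rightarrow> 'v) \<Rightarrow> 'v set \<Rightarrow> bool" where
  "delta_connected m X \<longleftrightarrow>
     (\<forall>x\<in>X. \<forall>y\<in>X. (\<lambda>u v. u \<in> X \<and> v \<in> X \<and> u \<noteq> v \<and> m u v \<noteq> 0)\<^sup>*\<^sup>* x y)"

text \<open>The algebra J(V,B) = F e + V, with elements represented as pairs (alpha, v), v in V.\<close>
definition Jprod :: "('f::field \<Rightarrow> 'v::ab_group_add \<Rightarrow> 'v) \<Rightarrow> ('v \<Rightarrow> 'v \<Rightarrow> 'f) \<Rightarrow> 'f \<times> 'v \<Rightarrow> 'f \<times> 'v \<Rightarrow> 'f \<times> 'v" where
  "Jprod sc B p q = (fst p * fst q + B (snd p) (snd q), sc (fst p) (snd q) + sc (fst q) (snd p))"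

definition sym_bilinear_on :: "('f::field \<Rightarrow> 'v::ab_group_add \<Rightarrow> 'v) \<Rightarrow> 'v set \<Rightarrow> ('v \<Rightarrow> 'v \<Rightarrow> 'f) \<Rightarrow> bool" where
  "sym_bilinear_on sc V B \<longleftrightarrow>
     (\<forall>u\<in>V. \<forall>v\<in>V. B u v = B v u)
     \<and> (\<forall>u\<in>V. \<forall>u'\<in>V. \<forall>v\<in>V. B (u + u') v = B u v + B u' v)
     \<and> (\<forall>c. \<forall>u\<in>V. \<forall>v\<in>V. B (sc c u) v = c * B u v)"

definition clifford_type :: "('f::field \<Rightarrow> 'v::ab_group_add \<Rightarrow> 'v) \<Rightarrow> ('v \<Rightarrow> 'v \<Rightarrow> 'v) \<Rightarrow> bool" where
  "clifford_type sc m \<longleftrightarrow>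
    (\<exists>V B \<phi>. module.subspace sc V \<and> sym_bilinear_on sc V B
       \<and> bij_betw \<phi> (UNIV \<times> V) UNIV
       \<and> (\<forall>p\<in>UNIV \<times> V. \<forall>q\<in>UNIV \<times> V. \<phi> (fst p + fst q, snd p + snd q) = \<phi> p + \<phi> q)
       \<and> (\<forall>c. \<forall>p\<in>UNIV \<times> V. \<phi> (c * fst p, sc c (snd p)) = sc c (\<phi> p))
       \<and> (\<forall>p\<in>UNIV \<times> V. \<forall>q\<in>UNIV \<times> V. \<phi> (Jprod sc B p q) = m (\<phi> p) (\<phi> q)))"

end

theory Submission
  imports Defs
begin

text \<open>
  Since \<open>\<tau>(a) = \<tau>(b)\<close>, the axes \<open>a\<close> and \<open>b\<close> have the same \<open>\<pm>\<close>-gradings, so \<open>ab = 0\<close> and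
  \<open>A = \<bbbF>a \<oplus> \<bbbF>b \<oplus> Z \<oplus> W\<close> with \<open>W = A\<^sub>\<eta>(a) = A\<^sub>\<eta>(b)\<close> and \<open>Z = A\<^sub>0(a) \<inter> A\<^sub>0(b)\<close>.
  Writing an axis \<open>y\<close> in these coordinates, the identities \<open>y\<^sup>2 = y\<close> and
  \<open>y(yx) - \<eta> yx = (1 - \<eta>) \<phi>\<^sub>y(x) y\<close> (for \<open>x = a, b\<close>) together with the symmetry
  \<open>\<phi>\<^sub>x(y) = \<phi>\<^sub>y(x)\<close> of the projection coefficients force \<open>\<eta> = 1/2\<close> as soon as some axis is
  adjacent to \<open>a\<close>. For \<open>\<eta> = 1/2\<close> every axis lies either in \<open>Z\<close> or in \<open>\<bbbF>a \<oplus> \<bbbF>b \<oplus> W\<close>, and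
  the axes of the second kind annihilate those of the first. By connectivity all generating
  axes are of the second kind; the axes of the second kind are closed under Miyamoto
  involutions, and \<open>xy = \<phi>\<^sub>x(y) x + \<eta> (y - \<tau>(x) y)/2\<close> shows that they span a subalgebra, so
  \<open>Z = 0\<close>. Then \<open>a + b\<close> acts as the identity, products in \<open>W\<close> lie in \<open>\<bbbF>(a + b)\<close>, and
  \<open>A = \<bbbF>(a + b) \<oplus> V\<close> with \<open>V = {\<alpha> a - \<alpha> b + w}\<close> is of Clifford type.
\<close>

lemma (in vector_space) add_self_eq_scale_two: "v + v = scale 2 v"
  by (metis one_add_one scale_left_distrib scale_one)

locale axial_jordan =
  fixes sc :: "'f::field \<Rightarrow> 'v::ab_group_add \<Rightarrow> 'v" and m :: "'v \<Rightarrow> 'v \<Rightarrow> 'v" and \<eta> :: 'f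
  assumes comm_alg: "comm_algebra sc m" and two_nonzero: "(2::'f) \<noteq> 0"
    and eta_nonzero: "\<eta> \<noteq> 0" and eta_neq_one: "\<eta> \<noteq> 1"
begin

sublocale vector_space sc
  using comm_alg by (simp add: comm_algebra_def)

lemma m_commute: "m x y = m y x" and m_add_left: "m (x + y) z = m x z + m y z"
  and m_scale_left: "m (sc c x) y = sc c (m x y)"
  using comm_alg unfolding comm_algebra_def by blast+

lemma m_add_right: "m z (x + y) = m z x + m z y"
  by (subst (1 2 3) m_commute, rule m_add_left)

lemma m_scale_right: "m y (sc c x) = sc c (m y x)"
  by (subst (1 2) m_commute, rule m_scale_left)

lemma m_zero_left: "m 0 y = 0"
  using m_add_left[of 0 0 y] by simp

lemma m_zero_right: "m y 0 = 0"
  by (subst m_commute, rule m_zero_left)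

lemma m_minus_left: "m (- x) y = - m x y"
  using m_add_left[of "- x" x y] by (simp add: m_zero_left eq_neg_iff_add_eq_0)

lemma m_minus_right: "m y (- x) = - m y x"
  by (subst m_commute, subst (2) m_commute, rule m_minus_left)

lemma m_diff_left: "m (x - y) z = m x z - m y z"
  by (simp only: diff_conv_add_uminus m_add_left m_minus_left)

lemma m_diff_right: "m z (x - y) = m z x - m z y"
  by (simp only: diff_conv_add_uminus m_add_right m_minus_right)

lemma add_self_eq_zero: "(v::'v) + v = 0 \<Longrightarrow> v = 0"
  using two_nonzero by (simp add: add_self_eq_scale_two)

lemma eq_scale_half: assumes "(v::'v) + v = u" shows "v = sc (1/2) u"
proof -
  have "sc (1/2) (sc 2 v) = sc (1/2) u" using assms by (simp add: add_self_eq_scale_two)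
  then show ?thesis using two_nonzero by simp
qed

lemma half_add_half: "(1::'f)/2 + 1/2 = 1"
  using two_nonzero by (simp add: field_simps)

lemma scale_half_add_half: "sc (1/2) v + sc (1/2) v = v"
  by (metis half_add_half scale_left_distrib scale_one)

subsection \<open>Eigenspaces and the decomposition with respect to an axis\<close>

abbreviation Eig where "Eig x t \<equiv> eigsp sc m x t"
abbreviation axis where "axis x \<equiv> is_axis sc m \<eta> x"

lemma mem_Eig: "u \<in> Eig x t \<longleftrightarrow> m x u = sc t u"
  unfolding eigsp_def using m_commute[of u x] by simp

lemma Eig_add: "u \<in> Eig x t \<Longrightarrow> v \<in> Eig x t \<Longrightarrow> u + v \<in> Eig x t"
  by (simp add: mem_Eig m_add_right scale_right_distrib)

lemma Eig_scale: "u \<in> Eig x t \<Longrightarrow> sc c u \<in> Eig x t"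
  by (simp add: mem_Eig m_scale_right scale_left_commute)

lemma Eig_zero: "0 \<in> Eig x t"
  by (simp add: mem_Eig m_zero_right)

lemma Eig_minus: "u \<in> Eig x t \<Longrightarrow> - u \<in> Eig x t"
  by (simp add: mem_Eig m_minus_right)

lemma Eig_diff: "u \<in> Eig x t \<Longrightarrow> v \<in> Eig x t \<Longrightarrow> u - v \<in> Eig x t"
  by (simp add: mem_Eig m_diff_right scale_right_diff_distrib)

lemma axis_idem: "axis x \<Longrightarrow> m x x = x"
  by (simp add: is_axis_def)

lemma axis_Eig_one: "axis x \<Longrightarrow> Eig x 1 = range (\<lambda>c. sc c x)"
  by (simp add: is_axis_def)

lemma axis_decomp_unique: "axis x \<Longrightarrow>
    \<exists>!t. fst t \<in> Eig x 1 \<and> fst (snd t) \<in> Eig x 0 \<and> snd (snd t) \<in> Eig x \<eta> \<and> u = fst t + fst (snd t) + snd (snd t)"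
  unfolding is_axis_def by blast

lemma axis_Eig_one_eq:
  assumes axx: "axis x" and axy: "axis y" and "x \<noteq> 0" "y \<noteq> 0" and "x \<in> Eig y 1" shows "x = y"
proof -
  obtain c where c: "x = sc c y" using assms(5) axis_Eig_one[OF axy] by auto
  then have "sc c y = sc (c * c) y" using axis_idem[OF axx] axis_idem[OF axy]
    by (simp add: m_scale_left m_scale_right)
  then have "c = c * c" using assms(4) by simp
  then have "c = 0 \<or> c = 1" by (metis mult_cancel_right1 mult_zero_left)
  then show ?thesis using c assms(3) by auto
qed

definition decomp where "decomp x u =
  (THE t. fst t \<in> Eig x 1 \<and> fst (snd t) \<in> Eig x 0 \<and> snd (snd t) \<in> Eig x \<eta> \<and> u = fst t + fst (snd t) + snd (snd t))"
definition "proj1 x u = fst (decomp x u)"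
definition "proj0 x u = fst (snd (decomp x u))"
definition "proj_eta x u = snd (snd (decomp x u))"
definition "coef x u = (THE c. proj1 x u = sc c x)"

lemma decomp_props: assumes "axis x"
  shows "proj1 x u \<in> Eig x 1" "proj0 x u \<in> Eig x 0" "proj_eta x u \<in> Eig x \<eta>"
    "u = proj1 x u + proj0 x u + proj_eta x u"
  using theI'[OF axis_decomp_unique[OF assms, of u]]
  unfolding decomp_def proj1_def proj0_def proj_eta_def by auto

lemma decomp_eq:
  assumes "axis x" "u1 \<in> Eig x 1" "u0 \<in> Eig x 0" "ue \<in> Eig x \<eta>" "u = u1 + u0 + ue"
  shows "proj1 x u = u1" "proj0 x u = u0" "proj_eta x u = ue"
proof -
  have "decomp x u = (u1, u0, ue)"
    unfolding decomp_def by (rule the1_equality[OF axis_decomp_unique[OF assms(1)]]) (simp add: assms)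
  then show "proj1 x u = u1" "proj0 x u = u0" "proj_eta x u = ue"
    by (simp_all add: proj1_def proj0_def proj_eta_def)
qed

lemma scale_axis_Eig_one: "axis x \<Longrightarrow> sc c x \<in> Eig x 1"
  by (simp add: mem_Eig m_scale_right axis_idem)

text \<open>The zero vector satisfies \<open>is_axis\<close> (with \<open>A\<^sub>0 = A\<close>), which is why nonzero
  hypotheses appear below.\<close>
lemma proj1_eq_coef: assumes "axis x" "x \<noteq> 0" shows "proj1 x u = sc (coef x u) x"
proof -
  obtain c where c: "proj1 x u = sc c x"
    using decomp_props(1)[OF assms(1), of u] axis_Eig_one[OF assms(1)] by auto
  have "coef x u = c" unfolding coef_def by (rule the_equality) (use c assms(2) in auto)
  then show ?thesis using c by simp
qed

lemma coef_decomp_eq: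
  assumes "axis x" "x \<noteq> 0" "u0 \<in> Eig x 0" "ue \<in> Eig x \<eta>" "u = sc c x + u0 + ue"
  shows "coef x u = c" "proj0 x u = u0" "proj_eta x u = ue"
proof -
  have "proj1 x u = sc c x" by (rule decomp_eq(1)[OF assms(1) scale_axis_Eig_one[OF assms(1)] assms(3-5)])
  then show "coef x u = c" using proj1_eq_coef[OF assms(1,2), of u] assms(2) by simp
  show "proj0 x u = u0" "proj_eta x u = ue"
    by (rule decomp_eq[OF assms(1) scale_axis_Eig_one[OF assms(1)] assms(3-5)])+
qed

lemma decomp_coef: assumes "axis x" "x \<noteq> 0" shows "u = sc (coef x u) x + proj0 x u + proj_eta x u"
  using decomp_props(4)[OF assms(1), of u] proj1_eq_coef[OF assms] by simp

context fixes x assumes axx: "axis x" and x0: "x \<noteq> 0"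
begin

lemma coords_add:
  "coef x (u + v) = coef x u + coef x v \<and> proj0 x (u + v) = proj0 x u + proj0 x v
   \<and> proj_eta x (u + v) = proj_eta x u + proj_eta x v"
proof -
  have "u + v = (sc (coef x u) x + proj0 x u + proj_eta x u) + (sc (coef x v) x + proj0 x v + proj_eta x v)"
    using decomp_coef[OF axx x0, of u] decomp_coef[OF axx x0, of v] by (rule arg_cong2)
  also have "\<dots> = sc (coef x u + coef x v) x + (proj0 x u + proj0 x v) + (proj_eta x u + proj_eta x v)"
    by (simp add: scale_left_distrib algebra_simps)
  finally have "u + v = \<dots>" .
  from coef_decomp_eq[OF axx x0 Eig_add[OF decomp_props(2)[OF axx] decomp_props(2)[OF axx]]
      Eig_add[OF decomp_props(3)[OF axx] decomp_props(3)[OF axx]] this]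
  show ?thesis by simp
qed

lemma coords_scale:
  "coef x (sc c u) = c * coef x u \<and> proj0 x (sc c u) = sc c (proj0 x u)
   \<and> proj_eta x (sc c u) = sc c (proj_eta x u)"
proof -
  have "sc c u = sc (c * coef x u) x + sc c (proj0 x u) + sc c (proj_eta x u)"
    using decomp_coef[OF axx x0, of u] by (metis scale_right_distrib scale_scale)
  from coef_decomp_eq[OF axx x0 Eig_scale[OF decomp_props(2)[OF axx]] Eig_scale[OF decomp_props(3)[OF axx]] this]
  show ?thesis by simp
qed

lemma coef_add[simp]: "coef x (u + v) = coef x u + coef x v"
  and proj0_add[simp]: "proj0 x (u + v) = proj0 x u + proj0 x v"
  and proj_eta_add[simp]: "proj_eta x (u + v) = proj_eta x u + proj_eta x v"
  and coef_scale[simp]: "coef x (sc c u) = c * coef x u"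
  and proj0_scale[simp]: "proj0 x (sc c u) = sc c (proj0 x u)"
  and proj_eta_scale[simp]: "proj_eta x (sc c u) = sc c (proj_eta x u)"
  using coords_add coords_scale by blast+

lemma coef_minus[simp]: "coef x (- u) = - coef x u"
  and proj0_minus[simp]: "proj0 x (- u) = - proj0 x u"
  and proj_eta_minus[simp]: "proj_eta x (- u) = - proj_eta x u"
  using coords_scale[of "- 1" u] by simp_all

lemma coef_diff[simp]: "coef x (u - v) = coef x u - coef x v"
  and proj0_diff[simp]: "proj0 x (u - v) = proj0 x u - proj0 x v"
  and proj_eta_diff[simp]: "proj_eta x (u - v) = proj_eta x u - proj_eta x v"
  by (simp_all only: diff_conv_add_uminus coef_add proj0_add proj_eta_add coef_minus proj0_minus proj_eta_minus)

lemma coef_self[simp]: "coef x x = 1" and proj0_self[simp]: "proj0 x x = 0"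
  and proj_eta_self[simp]: "proj_eta x x = 0"
  using coef_decomp_eq[OF axx x0 Eig_zero Eig_zero, of x 1] by simp_all

lemma coef_zero[simp]: "coef x 0 = 0" and proj0_zero[simp]: "proj0 x 0 = 0"
  and proj_eta_zero[simp]: "proj_eta x 0 = 0"
  using coef_decomp_eq[OF axx x0 Eig_zero Eig_zero, of 0 0] by simp_all

lemma coords_Eig0: "u \<in> Eig x 0 \<Longrightarrow> coef x u = 0 \<and> proj0 x u = u \<and> proj_eta x u = 0"
  using coef_decomp_eq[OF axx x0 _ Eig_zero, of u u 0] by simp

lemma coords_Eig_eta: "u \<in> Eig x \<eta> \<Longrightarrow> coef x u = 0 \<and> proj0 x u = 0 \<and> proj_eta x u = u"
  using coef_decomp_eq[OF axx x0 Eig_zero _, of u u 0] by simp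

lemma axis_mult: "m x u = sc (coef x u) x + sc \<eta> (proj_eta x u)"
proof -
  have "m x u = m x (sc (coef x u) x) + m x (proj0 x u) + m x (proj_eta x u)"
    by (subst decomp_coef[OF axx x0, of u]) (simp add: m_add_right)
  then show ?thesis using decomp_props(2,3)[OF axx, of u]
    by (simp add: mem_Eig m_scale_right axis_idem[OF axx])
qed

lemma axis_quadratic: "m x (m x u) - sc \<eta> (m x u) = sc ((1 - \<eta>) * coef x u) x"
proof -
  have "m x (m x u) = sc (coef x u) x + sc (\<eta> * \<eta>) (proj_eta x u)"
    using decomp_props(3)[OF axx, of u]
    by (simp add: axis_mult m_add_right m_scale_right axis_idem[OF axx] mem_Eig)
  then show ?thesis by (simp add: axis_mult algebra_simps scale_right_diff_distrib)
qed

end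

lemma Eig0_mult_Eig0: "axis x \<Longrightarrow> u \<in> Eig x 0 \<Longrightarrow> v \<in> Eig x 0 \<Longrightarrow> m u v \<in> Eig x 0"
  unfolding is_axis_def prod_in_def by blast

lemma Eig0_mult_Eig_eta: assumes "axis x" "u \<in> Eig x 0" "v \<in> Eig x \<eta>" shows "m u v \<in> Eig x \<eta>"
proof -
  have "u \<in> Aplus sc m x" unfolding Aplus_def using Eig_zero[of x 1] assms(2) by force
  moreover have "v \<in> Aminus sc m \<eta> x" using assms(3) by (simp add: Aminus_def)
  ultimately show ?thesis using assms(1) unfolding is_axis_def prod_in_def Aminus_def by blast
qed

lemma Eig_eta_mult_Eig0: "axis x \<Longrightarrow> u \<in> Eig x \<eta> \<Longrightarrow> v \<in> Eig x 0 \<Longrightarrow> m u v \<in> Eig x \<eta>"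
  using Eig0_mult_Eig_eta[of x v u] m_commute[of u v] by simp

lemma proj_eta_Eig_eta_mult:
  assumes "axis x" "u \<in> Eig x \<eta>" "v \<in> Eig x \<eta>" shows "proj_eta x (m u v) = 0"
proof -
  have "m u v \<in> Aplus sc m x" using assms unfolding is_axis_def prod_in_def Aminus_def by blast
  then obtain p q where "p \<in> Eig x 1" "q \<in> Eig x 0" "m u v = p + q" unfolding Aplus_def by blast
  then show ?thesis using decomp_eq(3)[OF assms(1), of p q 0 "m u v"] Eig_zero by simp
qed

lemma Aplus_decomp: "axis x \<Longrightarrow> proj1 x u + proj0 x u \<in> Aplus sc m x"
  unfolding Aplus_def using decomp_props by blast

lemma Aplus_add: assumes "p \<in> Aplus sc m x" "q \<in> Aplus sc m x" shows "p + q \<in> Aplus sc m x"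
proof -
  obtain p1 p0 q1 q0 where "p1 \<in> Eig x 1" "p0 \<in> Eig x 0" "q1 \<in> Eig x 1" "q0 \<in> Eig x 0"
    "p + q = (p1 + q1) + (p0 + q0)"
    using assms unfolding Aplus_def by (auto simp: algebra_simps)
  then show ?thesis unfolding Aplus_def by (blast intro: Eig_add)
qed

lemma proj_eta_plus_minus:
  assumes "axis x" "p \<in> Aplus sc m x" "n \<in> Eig x \<eta>" shows "proj_eta x (p + n) = n"
proof -
  obtain p1 p0 where "p1 \<in> Eig x 1" "p0 \<in> Eig x 0" "p = p1 + p0" using assms(2) unfolding Aplus_def
    by blast
  then show ?thesis using decomp_eq[OF assms(1), of p1 p0 n "p + n"] assms(3) by simp
qed

subsection \<open>Symmetry of the projection coefficients\<close>

text \<open>Compare the \<open>x\<close>-coefficients of \<open>y\<^sup>2 = y\<close> and of the quadratic relation of \<open>y\<close>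
  applied to \<open>x\<close>.\<close>
lemma coef_sym_factor: assumes axx: "axis x" and axy: "axis y" and x0: "x \<noteq> 0" and y0: "y \<noteq> 0"
  shows "coef x y * (coef x y - coef y x) = 0"
proof -
  define \<phi> where "\<phi> = coef x y"
  define \<psi> where "\<psi> = coef y x"
  define u0 where "u0 = proj0 x y"
  define ue where "ue = proj_eta x y"
  define \<kappa> where "\<kappa> = coef x (m ue ue)"
  have hy: "y = sc \<phi> x + u0 + ue" unfolding \<phi>_def u0_def ue_def by (rule decomp_coef[OF axx x0])
  have u0E: "u0 \<in> Eig x 0" and ueE: "ue \<in> Eig x \<eta>" unfolding u0_def ue_def
    using decomp_props[OF axx] by auto
  note simps = coef_add[OF axx x0] coef_scale[OF axx x0] coef_self[OF axx x0]
    m_add_left m_add_right m_scale_left m_scale_right axis_idem[OF axx]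
  have m1: "m x u0 = 0" "m u0 x = 0" using u0E mem_Eig m_commute by auto
  have m2: "m x ue = sc \<eta> ue" "m ue x = sc \<eta> ue" using ueE mem_Eig m_commute by auto
  have l1: "coef x (m u0 u0) = 0" "coef x (m u0 ue) = 0" "coef x (m ue u0) = 0" "coef x ue = 0" "coef x u0 = 0"
    using coords_Eig0[OF axx x0 Eig0_mult_Eig0[OF axx u0E u0E]]
      coords_Eig_eta[OF axx x0 Eig0_mult_Eig_eta[OF axx u0E ueE]]
      coords_Eig_eta[OF axx x0 Eig_eta_mult_Eig0[OF axx ueE u0E]]
      coords_Eig_eta[OF axx x0 ueE] coords_Eig0[OF axx x0 u0E] by auto
  have "coef x (m y y) = \<phi>" using axis_idem[OF axy] \<phi>_def by simp
  moreover have "m y y = m (sc \<phi> x + u0 + ue) (sc \<phi> x + u0 + ue)" using hy by simp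
  ultimately have \<kappa>_eq: "\<kappa> = \<phi> - \<phi> * \<phi>"
    unfolding \<kappa>_def by (simp add: simps m1 m2 l1 m_zero_left m_zero_right algebra_simps)
  have yx: "m y x = sc \<phi> x + sc \<eta> ue"
    using axis_mult[OF axx x0, of y] m_commute[of y x] \<phi>_def ue_def by simp
  have mye: "m y ue = sc \<phi> (m x ue) + m u0 ue + m ue ue" using hy
    by (simp add: m_add_left m_scale_left)
  have "m y (m y x) = m y (sc \<phi> x + sc \<eta> ue)" by (simp only: yx)
  then have "m y (m y x) = sc \<phi> (m y x) + sc \<eta> (m y ue)" by (simp add: m_add_right m_scale_right)
  moreover have "coef x (m y x) = \<phi>" using yx l1 by (simp add: simps)
  moreover have "coef x (m y ue) = \<kappa>" unfolding mye \<kappa>_def by (simp add: simps m2 l1)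
  ultimately have "coef x (m y (m y x) - sc \<eta> (m y x)) = \<phi> * \<phi> + \<eta> * \<kappa> - \<eta> * \<phi>"
    by (simp add: simps coef_diff[OF axx x0])
  moreover have "coef x (m y (m y x) - sc \<eta> (m y x)) = (1 - \<eta>) * \<psi> * \<phi>"
    unfolding axis_quadratic[OF axy y0] \<psi>_def using \<phi>_def by (simp add: simps)
  ultimately have "(1 - \<eta>) * (\<phi> * (\<phi> - \<psi>)) = 0" using \<kappa>_eq by (simp add: algebra_simps)
  then show ?thesis using eta_neq_one unfolding \<phi>_def \<psi>_def by simp
qed

lemma coef_sym: assumes "axis x" "axis y" "x \<noteq> 0" "y \<noteq> 0" shows "coef x y = coef y x"
proof -
  have "coef x y * (coef x y - coef y x) = 0" "coef y x * (coef y x - coef x y) = 0"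
    using coef_sym_factor assms by auto
  then show ?thesis by (auto simp: right_diff_distrib)
qed

subsection \<open>Miyamoto involutions\<close>

definition "tau x u = proj1 x u + proj0 x u - proj_eta x u"

lemma miyamoto_eq_tau: assumes "axis x" shows "miyamoto sc m \<eta> x = tau x"
proof
  fix u
  show "miyamoto sc m \<eta> x u = tau x u"
    unfolding miyamoto_def
  proof (rule the_equality)
    show "\<exists>p n. p \<in> Aplus sc m x \<and> n \<in> Aminus sc m \<eta> x \<and> u = p + n \<and> tau x u = p - n"
      using decomp_props[OF assms, of u] Aplus_decomp[OF assms, of u]
      by (intro exI[of _ "proj1 x u + proj0 x u"] exI[of _ "proj_eta x u"]) (simp add: Aminus_def tau_def)
  next
    fix y assume "\<exists>p n. p \<in> Aplus sc m x \<and> n \<in> Aminus sc m \<eta> x \<and> u = p + n \<and> y = p - n"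
    then obtain p n where "p \<in> Aplus sc m x" "n \<in> Eig x \<eta>" "u = p + n" "y = p - n"
      unfolding Aminus_def by blast
    moreover have "proj1 x u + proj0 x u = u - proj_eta x u"
      using decomp_props(4)[OF assms, of u] by (metis add_diff_cancel)
    ultimately show "y = tau x u" using proj_eta_plus_minus[OF assms] by (simp add: tau_def)
  qed
qed

lemma tau_plus_minus: assumes "axis x" "p \<in> Aplus sc m x" "n \<in> Eig x \<eta>" shows "tau x (p + n) = p - n"
proof -
  have "proj1 x (p + n) + proj0 x (p + n) = p"
    using decomp_props(4)[OF assms(1), of "p + n"] proj_eta_plus_minus[OF assms]
    by (simp add: algebra_simps)
  then show ?thesis using proj_eta_plus_minus[OF assms] by (simp add: tau_def)
qed

lemma diff_tau: assumes "axis x" shows "u - tau x u = proj_eta x u + proj_eta x u"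
  and add_tau: "u + tau x u = (proj1 x u + proj0 x u) + (proj1 x u + proj0 x u)"
proof -
  define p n where "p = proj1 x u + proj0 x u" and "n = proj_eta x u"
  have "u = p + n" unfolding p_def n_def using decomp_props(4)[OF assms] by (simp add: add.assoc)
  then show "u - tau x u = proj_eta x u + proj_eta x u" "u + tau x u = p + p"
    unfolding tau_def p_def[symmetric] n_def[symmetric] by (simp_all add: algebra_simps)
qed

lemma tau_fixed_iff: assumes "axis x" shows "tau x u = u \<longleftrightarrow> u \<in> Aplus sc m x"
proof
  assume "tau x u = u"
  then have "proj_eta x u + proj_eta x u = 0" using diff_tau(1)[OF assms, of u] by simp
  then have "proj_eta x u = 0" by (rule add_self_eq_zero)
  then show "u \<in> Aplus sc m x"
    using decomp_props(4)[OF assms, of u] Aplus_decomp[OF assms, of u] by (metis add_0_right)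
next
  assume "u \<in> Aplus sc m x"
  then show "tau x u = u" using tau_plus_minus[OF assms, of u 0] Eig_zero by simp
qed

lemma tau_minus_iff: assumes "axis x" shows "tau x u = - u \<longleftrightarrow> u \<in> Eig x \<eta>"
proof
  assume "tau x u = - u"
  then have "(proj1 x u + proj0 x u) + (proj1 x u + proj0 x u) = 0" using add_tau[OF assms, of u]
    by simp
  then have "proj1 x u + proj0 x u = 0" by (rule add_self_eq_zero)
  then show "u \<in> Eig x \<eta>" using decomp_props(3,4)[OF assms, of u] by (metis add_0_left)
next
  assume "u \<in> Eig x \<eta>"
  then show "tau x u = - u" using tau_plus_minus[OF assms, of 0 u] Eig_zero unfolding Aplus_def
    by force
qed

lemma tau_zero_axis: assumes "axis 0" shows "tau 0 = id"
proof
  fix u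
  have "proj_eta 0 u = 0" using decomp_props(3)[OF assms, of u] eta_nonzero
    by (simp add: mem_Eig m_zero_left)
  then show "tau 0 u = id u" using diff_tau[OF assms, of u] by simp
qed

lemma axis_mult_tau: assumes "axis x" "x \<noteq> 0"
  shows "m x y = sc (coef x y) x + sc \<eta> (sc (1/2) (y - tau x y))"
  using axis_mult[OF assms, of y] eq_scale_half[OF diff_tau(1)[OF assms(1), of y, symmetric]]
  by simp

definition inv_automorphism :: "('v \<Rightarrow> 'v) \<Rightarrow> bool" where
  "inv_automorphism \<sigma> \<longleftrightarrow> (\<forall>u. \<sigma> (\<sigma> u) = u) \<and> (\<forall>u v. \<sigma> (u + v) = \<sigma> u + \<sigma> v)
     \<and> (\<forall>c u. \<sigma> (sc c u) = sc c (\<sigma> u)) \<and> (\<forall>u v. \<sigma> (m u v) = m (\<sigma> u) (\<sigma> v))"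

lemma tau_tau: assumes axx: "axis x" shows "tau x (tau x u) = u"
proof -
  have "tau x u = (proj1 x u + proj0 x u) + (- proj_eta x u)" by (simp add: tau_def)
  then have "tau x (tau x u) = (proj1 x u + proj0 x u) + proj_eta x u"
    using tau_plus_minus[OF axx Aplus_decomp[OF axx] Eig_minus[OF decomp_props(3)[OF axx]]] by simp
  then show ?thesis using decomp_props(4)[OF axx, of u] by simp
qed

lemma tau_mult: assumes axx: "axis x" shows "tau x (m u v) = m (tau x u) (tau x v)"
proof -
  define pu nu pv nv where "pu = proj1 x u + proj0 x u" "nu = proj_eta x u"
    "pv = proj1 x v + proj0 x v" "nv = proj_eta x v"
  have mem: "pu \<in> Aplus sc m x" "pv \<in> Aplus sc m x" "nu \<in> Eig x \<eta>" "nv \<in> Eig x \<eta>"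
    unfolding pu_nu_pv_nv_def using Aplus_decomp[OF axx] decomp_props[OF axx] by auto
  have uv: "u = pu + nu" "v = pv + nv"
    unfolding pu_nu_pv_nv_def using decomp_props(4)[OF axx] by (simp_all add: add.assoc)
  have fus: "m pu pv \<in> Aplus sc m x" "m nu nv \<in> Aplus sc m x" "m pu nv \<in> Eig x \<eta>" "m nu pv \<in> Eig x \<eta>"
    using axx mem unfolding is_axis_def prod_in_def Aminus_def by (auto simp: m_commute[of nu pv])
  have "m u v = (m pu pv + m nu nv) + (m pu nv + m nu pv)"
    unfolding uv by (simp add: m_add_left m_add_right algebra_simps)
  then have "tau x (m u v) = (m pu pv + m nu nv) - (m pu nv + m nu pv)"
    using tau_plus_minus[OF axx] fus Aplus_add Eig_add by simp
  also have "\<dots> = m (pu - nu) (pv - nv)" by (simp add: m_diff_left m_diff_right algebra_simps)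
  finally show ?thesis using tau_plus_minus[OF axx] mem uv by simp
qed

lemma tau_inv_automorphism: assumes axx: "axis x" and x0: "x \<noteq> 0" shows "inv_automorphism (tau x)"
proof -
  have t: "tau x u = sc (coef x u) x + proj0 x u - proj_eta x u" for u
    by (simp add: tau_def proj1_eq_coef[OF axx x0])
  show ?thesis unfolding inv_automorphism_def using tau_tau[OF axx] tau_mult[OF axx]
    by (simp add: t axx x0 scale_left_distrib scale_right_diff_distrib scale_right_distrib algebra_simps)
qed

lemma inv_automorphism_eq_iff: assumes "inv_automorphism \<sigma>" shows "\<sigma> u = \<sigma> v \<longleftrightarrow> u = v"
proof -
  have "\<sigma> (\<sigma> w) = w" for w using assms by (simp add: inv_automorphism_def)
  then show ?thesis by metis
qed

lemma inv_automorphism_Eig: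
  assumes \<sigma>: "inv_automorphism \<sigma>" shows "u \<in> Eig (\<sigma> y) t \<longleftrightarrow> \<sigma> u \<in> Eig y t"
proof -
  have "u \<in> Eig (\<sigma> y) t \<longleftrightarrow> \<sigma> (m u (\<sigma> y)) = \<sigma> (sc t u)"
    by (simp add: eigsp_def inv_automorphism_eq_iff[OF \<sigma>])
  then show ?thesis using \<sigma> by (simp add: eigsp_def inv_automorphism_def)
qed

lemma inv_automorphism_Aplus:
  assumes \<sigma>: "inv_automorphism \<sigma>" shows "v \<in> Aplus sc m (\<sigma> y) \<longleftrightarrow> \<sigma> v \<in> Aplus sc m y"
proof
  assume "v \<in> Aplus sc m (\<sigma> y)"
  then obtain p q where "p \<in> Eig (\<sigma> y) 1" "q \<in> Eig (\<sigma> y) 0" "v = p + q" unfolding Aplus_def by blast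
  then show "\<sigma> v \<in> Aplus sc m y"
    using \<sigma> inv_automorphism_Eig[OF \<sigma>] unfolding Aplus_def inv_automorphism_def by blast
next
  assume "\<sigma> v \<in> Aplus sc m y"
  then obtain p q where "p \<in> Eig y 1" "q \<in> Eig y 0" "\<sigma> v = p + q" unfolding Aplus_def by blast
  then have "\<sigma> p \<in> Eig (\<sigma> y) 1" "\<sigma> q \<in> Eig (\<sigma> y) 0" "v = \<sigma> p + \<sigma> q"
    using \<sigma> inv_automorphism_Eig[OF \<sigma>] unfolding inv_automorphism_def by metis+
  then show "v \<in> Aplus sc m (\<sigma> y)" unfolding Aplus_def by blast
qed

lemma inv_automorphism_decomp_unique:
  assumes \<sigma>: "inv_automorphism \<sigma>" and axy: "axis y"
  shows "\<exists>!t. fst t \<in> Eig (\<sigma> y) 1 \<and> fst (snd t) \<in> Eig (\<sigma> y) 0 \<and> snd (snd t) \<in> Eig (\<sigma> y) \<eta>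
    \<and> u = fst t + fst (snd t) + snd (snd t)"
proof -
  define D where "D z v t \<longleftrightarrow> fst t \<in> Eig z 1 \<and> fst (snd t) \<in> Eig z 0 \<and> snd (snd t) \<in> Eig z \<eta>
    \<and> v = fst t + fst (snd t) + snd (snd t)" for z v and t :: "'v \<times> 'v \<times> 'v"
  define f where "f t = (\<sigma> (fst t), \<sigma> (fst (snd t)), \<sigma> (snd (snd t)))" for t :: "'v \<times> 'v \<times> 'v"
  have ff: "f (f t) = t" for t using \<sigma> by (simp add: f_def inv_automorphism_def)
  have "u = p + q + r \<longleftrightarrow> \<sigma> u = \<sigma> p + \<sigma> q + \<sigma> r" for p q r
    using \<sigma> inv_automorphism_eq_iff[OF \<sigma>] unfolding inv_automorphism_def by metis
  then have Df: "D (\<sigma> y) u t \<longleftrightarrow> D y (\<sigma> u) (f t)" for t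
    unfolding D_def f_def by (simp add: inv_automorphism_Eig[OF \<sigma>])
  obtain t0 where "D y (\<sigma> u) t0" and t0: "\<And>t. D y (\<sigma> u) t \<Longrightarrow> t = t0"
    using axis_decomp_unique[OF axy, of "\<sigma> u"] unfolding D_def by blast
  have "\<exists>!t. D (\<sigma> y) u t"
  proof (rule ex1I)
    show "D (\<sigma> y) u (f t0)" using Df ff \<open>D y (\<sigma> u) t0\<close> by simp
    show "t = f t0" if "D (\<sigma> y) u t" for t using that Df t0 ff by metis
  qed
  then show ?thesis unfolding D_def .
qed

lemma inv_automorphism_axis: assumes \<sigma>: "inv_automorphism \<sigma>" and axy: "axis y" shows "axis (\<sigma> y)"
proof -
  have inv: "\<sigma> (\<sigma> u) = u" and smul: "\<sigma> (m u v) = m (\<sigma> u) (\<sigma> v)" and ssc: "\<sigma> (sc c u) = sc c (\<sigma> u)"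
    for u v c using \<sigma> unfolding inv_automorphism_def by blast+
  have Am: "v \<in> Aminus sc m \<eta> (\<sigma> y) \<longleftrightarrow> \<sigma> v \<in> Aminus sc m \<eta> y" for v
    unfolding Aminus_def using inv_automorphism_Eig[OF \<sigma>] by blast
  have transfer: "prod_in m X Y Z" if "prod_in m X' Y' Z'" "\<And>v. v \<in> X \<longleftrightarrow> \<sigma> v \<in> X'"
    "\<And>v. v \<in> Y \<longleftrightarrow> \<sigma> v \<in> Y'" "\<And>v. v \<in> Z \<longleftrightarrow> \<sigma> v \<in> Z'" for X Y Z X' Y' Z'
    using that unfolding prod_in_def by (metis smul)
  have "m (\<sigma> y) (\<sigma> y) = \<sigma> y" using axis_idem[OF axy] smul by metis
  moreover have "Eig (\<sigma> y) 1 = range (\<lambda>c. sc c (\<sigma> y))"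
  proof -
    have "\<sigma> u = sc c y \<longleftrightarrow> u = sc c (\<sigma> y)" for u c by (metis inv ssc)
    then show ?thesis using axis_Eig_one[OF axy] inv_automorphism_Eig[OF \<sigma>] by blast
  qed
  moreover note inv_automorphism_decomp_unique[OF \<sigma> axy]
  moreover have "prod_in m (Aplus sc m (\<sigma> y)) (Aplus sc m (\<sigma> y)) (Aplus sc m (\<sigma> y))"
    "prod_in m (Aplus sc m (\<sigma> y)) (Aminus sc m \<eta> (\<sigma> y)) (Aminus sc m \<eta> (\<sigma> y))"
    "prod_in m (Aminus sc m \<eta> (\<sigma> y)) (Aminus sc m \<eta> (\<sigma> y)) (Aplus sc m (\<sigma> y))"
    "prod_in m (Eig (\<sigma> y) 0) (Eig (\<sigma> y) 0) (Eig (\<sigma> y) 0)"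
    by (rule transfer; use axy inv_automorphism_Aplus[OF \<sigma>] Am inv_automorphism_Eig[OF \<sigma>] in
        \<open>auto simp: is_axis_def\<close>)+
  ultimately show ?thesis unfolding is_axis_def by blast
qed

lemma tau_axis: "axis x \<Longrightarrow> x \<noteq> 0 \<Longrightarrow> axis y \<Longrightarrow> axis (tau x y)"
  by (rule inv_automorphism_axis[OF tau_inv_automorphism])

lemma span_mult_closed: assumes B: "\<And>x y. x \<in> B \<Longrightarrow> y \<in> B \<Longrightarrow> m x y \<in> span B"
  and u: "u \<in> span B" and v: "v \<in> span B" shows "m u v \<in> span B"
proof -
  have "\<forall>v\<in>span B. m u v \<in> span B" using u
  proof (induct rule: span_induct)
    case base show ?case
      unfolding subspace_def by (auto simp: m_add_left m_scale_left m_zero_left span_add span_scale span_zero)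
  next
    case (step x)
    have "m x v \<in> span B" if "v \<in> span B" for v using that
    proof (induct rule: span_induct)
      case base show ?case
        unfolding subspace_def
        by (auto simp: m_add_right m_scale_right m_zero_right span_add span_scale span_zero)
    next
      case (step y) then show ?case using B[OF \<open>x \<in> B\<close>] by blast
    qed
    then show ?case by blast
  qed
  then show ?thesis using v by blast
qed

end

subsection \<open>Two axes with the same Miyamoto involution\<close>

locale equal_miyamoto_pair = axial_jordan sc m \<eta>
  for sc :: "'f::field \<Rightarrow> 'v::ab_group_add \<Rightarrow> 'v" and m and \<eta> +
  fixes a b :: 'v
  assumes axa: "axis a" and axb: "axis b" and ab: "a \<noteq> b"
    and tau_a_eq_b: "tau a = tau b" and tau_a_neq_id: "tau a \<noteq> id"
begin

lemma a_nonzero: "a \<noteq> 0" and b_nonzero: "b \<noteq> 0"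
proof -
  show "a \<noteq> 0" using tau_zero_axis axa tau_a_neq_id by blast
  then show "b \<noteq> 0" using tau_zero_axis axb tau_a_neq_id tau_a_eq_b by metis
qed

lemma Aplus_a_eq_b: "Aplus sc m a = Aplus sc m b"
  by (rule set_eqI) (simp only: tau_fixed_iff[OF axa, symmetric] tau_fixed_iff[OF axb, symmetric] tau_a_eq_b)
lemma Eig_eta_a_eq_b: "Eig a \<eta> = Eig b \<eta>"
  by (rule set_eqI) (simp only: tau_minus_iff[OF axa, symmetric] tau_minus_iff[OF axb, symmetric] tau_a_eq_b)

text \<open>Since \<open>b \<in> A\<^sub>+(b) = A\<^sub>+(a)\<close>, \<open>b = \<lambda> a + b\<^sub>0\<close> with \<open>b\<^sub>0 \<in> A\<^sub>0(a)\<close>; then \<open>b\<^sup>2 = b\<close> forces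
  \<open>\<lambda> \<in> {0, 1}\<close>, and \<open>\<lambda> = 1\<close> would make \<open>a\<close> a \<open>1\<close>-eigenvector of \<open>b\<close>.\<close>
lemma mult_a_b: "m a b = 0"
proof -
  have "b \<in> Aplus sc m b" unfolding Aplus_def
    using scale_axis_Eig_one[OF axb, of 1] Eig_zero[of b 0] by force
  then have pe: "proj_eta a b = 0" using Aplus_a_eq_b proj_eta_plus_minus[OF axa, of b 0] Eig_zero
    by simp
  define l where "l = coef a b"
  define b1 where "b1 = proj0 a b"
  have "b = sc l a + b1 + proj_eta a b" unfolding l_def b1_def
    by (rule decomp_coef[OF axa a_nonzero])
  then have hb: "b = sc l a + b1" by (simp only: pe add_0_right)
  have b1E: "b1 \<in> Eig a 0" unfolding b1_def using decomp_props[OF axa] by auto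
  have mab1: "m a b1 = 0" "m b1 a = 0" using b1E by (auto simp: mem_Eig m_commute[of b1 a])
  have "coef a (m b b) = l" using axis_idem[OF axb] l_def by simp
  moreover have "m b b = m (sc l a + b1) (sc l a + b1)" using hb by simp
  ultimately have "l = l * l"
    using coords_Eig0[OF axa a_nonzero Eig0_mult_Eig0[OF axa b1E b1E]] coords_Eig0[OF axa a_nonzero b1E]
    by (simp add: m_add_left m_add_right m_scale_left m_scale_right mab1 axis_idem[OF axa]
        coef_add[OF axa a_nonzero] coef_scale[OF axa a_nonzero] coef_self[OF axa a_nonzero])
  then have "l = 0 \<or> l = 1" by (metis mult_cancel_right1 mult_zero_left)
  moreover have "l \<noteq> 1"
  proof
    assume "l = 1"
    then have "m b a = a" using hb by (simp add: m_add_left m_scale_left axis_idem[OF axa] mab1)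
    then have "a = b" using axis_Eig_one_eq[OF axa axb a_nonzero b_nonzero]
      by (simp add: eigsp_def m_commute[of a b])
    then show False using ab by simp
  qed
  ultimately have "b = b1" using hb by simp
  then show ?thesis using b1E by (simp add: mem_Eig)
qed

lemma mult_b_a: "m b a = 0" by (subst m_commute) (rule mult_a_b)
lemma b_Eig0_a: "b \<in> Eig a 0" using mult_a_b by (simp add: mem_Eig)
lemma a_Eig0_b: "a \<in> Eig b 0" using mult_b_a by (simp add: mem_Eig)

subsection \<open>Coordinates with respect to \<open>A = \<bbbF>a \<oplus> \<bbbF>b \<oplus> Z \<oplus> W\<close>\<close>

definition "W = Eig a \<eta>"
definition "Z = Eig a 0 \<inter> Eig b 0"
definition "cA u = coef a u"
definition "cB u = coef b u"
definition "cW u = proj_eta a u"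
definition "cZ u = u - sc (cA u) a - sc (cB u) b - cW u"

lemma W_a: "w \<in> W \<Longrightarrow> w \<in> Eig a \<eta>" and W_b: "w \<in> W \<Longrightarrow> w \<in> Eig b \<eta>" using Eig_eta_a_eq_b
  by (auto simp: W_def)
lemma Z_a: "z \<in> Z \<Longrightarrow> z \<in> Eig a 0" and Z_b: "z \<in> Z \<Longrightarrow> z \<in> Eig b 0" by (auto simp: Z_def)

lemma W_closed[simp]: "0 \<in> W" "u \<in> W \<Longrightarrow> v \<in> W \<Longrightarrow> u + v \<in> W" "u \<in> W \<Longrightarrow> sc c u \<in> W"
  "u \<in> W \<Longrightarrow> - u \<in> W" "u \<in> W \<Longrightarrow> v \<in> W \<Longrightarrow> u - v \<in> W"
  by (auto simp: W_def Eig_zero Eig_add Eig_scale Eig_minus Eig_diff)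
lemma Z_closed[simp]: "0 \<in> Z" "u \<in> Z \<Longrightarrow> v \<in> Z \<Longrightarrow> u + v \<in> Z" "u \<in> Z \<Longrightarrow> sc c u \<in> Z"
  "u \<in> Z \<Longrightarrow> - u \<in> Z" "u \<in> Z \<Longrightarrow> v \<in> Z \<Longrightarrow> u - v \<in> Z"
  by (auto simp: Z_def Eig_zero Eig_add Eig_scale Eig_minus Eig_diff)

lemma mult_table[simp]:
  "m a a = a" "m b b = b" "m a b = 0" "m b a = 0"
  "z \<in> Z \<Longrightarrow> m a z = 0" "z \<in> Z \<Longrightarrow> m z a = 0" "z \<in> Z \<Longrightarrow> m b z = 0" "z \<in> Z \<Longrightarrow> m z b = 0"
  "w \<in> W \<Longrightarrow> m a w = sc \<eta> w" "w \<in> W \<Longrightarrow> m w a = sc \<eta> w" "w \<in> W \<Longrightarrow> m b w = sc \<eta> w" "w \<in> W \<Longrightarrow> m w b = sc \<eta> w"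
  using axis_idem[OF axa] axis_idem[OF axb] mult_a_b mult_b_a
  by (auto simp: mem_Eig dest: Z_a Z_b W_a W_b) (metis mem_Eig m_commute Z_a Z_b W_a W_b scale_zero_left)+

lemma Z_mult_closed[simp]: "z \<in> Z \<Longrightarrow> z' \<in> Z \<Longrightarrow> m z z' \<in> Z" "z \<in> Z \<Longrightarrow> w \<in> W \<Longrightarrow> m z w \<in> W"
  "z \<in> Z \<Longrightarrow> w \<in> W \<Longrightarrow> m w z \<in> W"
  by (auto simp: Z_def W_def intro: Eig0_mult_Eig0[OF axa] Eig0_mult_Eig0[OF axb] Eig0_mult_Eig_eta[OF axa] Eig_eta_mult_Eig0[OF axa])

lemma proj_eta_b_eq_a: "proj_eta b u = proj_eta a u"
proof -
  have "u = (proj1 a u + proj0 a u) + proj_eta a u" using decomp_props(4)[OF axa, of u]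
    by (simp add: add.assoc)
  moreover have "proj1 a u + proj0 a u \<in> Aplus sc m b" using Aplus_decomp[OF axa, of u] Aplus_a_eq_b
    by simp
  moreover have "proj_eta a u \<in> Eig b \<eta>" using decomp_props(3)[OF axa, of u] Eig_eta_a_eq_b by simp
  ultimately show ?thesis using proj_eta_plus_minus[OF axb] by metis
qed

lemma cZ_mem: "cZ u \<in> Z"
proof -
  have shift: "(v::'v) = x + p + w \<Longrightarrow> v - x - y - w = p - y" "(v::'v) = y + p + w \<Longrightarrow> v - x - y - w = p - x"
    for v x y p w by (simp_all add: algebra_simps)
  have h1: "cZ u = proj0 a u - sc (cB u) b"
    unfolding cZ_def cA_def cW_def by (rule shift(1)[OF decomp_coef[OF axa a_nonzero]])
  have h2: "cZ u = proj0 b u - sc (cA u) a"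
    unfolding cZ_def cB_def cW_def proj_eta_b_eq_a[symmetric]
    by (rule shift(2)[OF decomp_coef[OF axb b_nonzero]])
  have "cZ u \<in> Eig a 0" unfolding h1 by (intro Eig_diff Eig_scale decomp_props(2)[OF axa] b_Eig0_a)
  moreover have "cZ u \<in> Eig b 0" unfolding h2
    by (intro Eig_diff Eig_scale decomp_props(2)[OF axb] a_Eig0_b)
  ultimately show ?thesis unfolding Z_def by blast
qed

lemma coord_dec: "u = sc (cA u) a + sc (cB u) b + cZ u + cW u" by (simp add: cZ_def)

lemma coord_eq: assumes "u = sc \<alpha> a + sc \<beta> b + z + w" "z \<in> Z" "w \<in> W"
  shows "cA u = \<alpha>" "cB u = \<beta>" "cW u = w" "cZ u = z"
proof -
  have 1: "u = sc \<alpha> a + (sc \<beta> b + z) + w" using assms(1) by (simp add: add.assoc)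
  have 2: "sc \<beta> b + z \<in> Eig a 0" using assms(2) b_Eig0_a
    by (auto simp: Z_def intro!: Eig_add Eig_scale)
  show A: "cA u = \<alpha>" "cW u = w" unfolding cA_def cW_def
    using coef_decomp_eq[OF axa a_nonzero 2 W_a[OF assms(3)] 1] by auto
  have 3: "u = sc \<beta> b + (sc \<alpha> a + z) + w" using assms(1) by (simp add: algebra_simps)
  have 4: "sc \<alpha> a + z \<in> Eig b 0" using assms(2) a_Eig0_b
    by (auto simp: Z_def intro!: Eig_add Eig_scale)
  show B: "cB u = \<beta>" unfolding cB_def using coef_decomp_eq[OF axb b_nonzero 4 W_b[OF assms(3)] 3]
    by auto
  show "cZ u = z" unfolding cZ_def A B using assms(1) by (simp add: algebra_simps)
qed

lemma coord_lin[simp]: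
  "cA (u + v) = cA u + cA v" "cB (u + v) = cB u + cB v" "cW (u + v) = cW u + cW v" "cZ (u + v) = cZ u + cZ v"
  "cA (sc c u) = c * cA u" "cB (sc c u) = c * cB u" "cW (sc c u) = sc c (cW u)" "cZ (sc c u) = sc c (cZ u)"
  "cA (- u) = - cA u" "cB (- u) = - cB u" "cW (- u) = - cW u" "cZ (- u) = - cZ u"
  "cA (u - v) = cA u - cA v" "cB (u - v) = cB u - cB v" "cW (u - v) = cW u - cW v" "cZ (u - v) = cZ u - cZ v"
  "cA 0 = 0" "cB 0 = 0" "cW 0 = 0" "cZ 0 = 0"
  by (simp_all add: cA_def cB_def cW_def cZ_def axa axb a_nonzero b_nonzero algebra_simps scale_left_distrib scale_right_distrib
      scale_right_diff_distrib scale_left_diff_distrib)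

lemma coord_basic[simp]:
  "cA a = 1" "cB a = 0" "cW a = 0" "cZ a = 0" "cA b = 0" "cB b = 1" "cW b = 0" "cZ b = 0"
  using coord_eq[of a 1 0 0 0] coord_eq[of b 0 1 0 0] by simp_all

lemma coord_Z[simp]: assumes "z \<in> Z" shows "cA z = 0" "cB z = 0" "cW z = 0" "cZ z = z"
  using coord_eq[of z 0 0 z 0] assms by simp_all
lemma coord_W[simp]: assumes "w \<in> W" shows "cA w = 0" "cB w = 0" "cW w = w" "cZ w = 0"
  using coord_eq[of w 0 0 0 w] assms by simp_all

lemma cW_ww[simp]: "w \<in> W \<Longrightarrow> w' \<in> W \<Longrightarrow> cW (m w w') = 0"
  unfolding cW_def using proj_eta_Eig_eta_mult[OF axa] W_a by blast

lemma coord_inj: "cA u = cA v \<Longrightarrow> cB u = cB v \<Longrightarrow> cZ u = cZ v \<Longrightarrow> cW u = cW v \<Longrightarrow> u = v"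
  by (metis coord_dec)

lemma cW_mem[simp]: "cW u \<in> W" unfolding cW_def W_def using decomp_props(3)[OF axa] .

lemma mult_a_left: "m a y = sc (cA y) a + sc \<eta> (cW y)"
  and mult_b_left: "m b y = sc (cB y) b + sc \<eta> (cW y)"
proof -
  have "m a y = m a (sc (cA y) a + sc (cB y) b + cZ y + cW y)"
    and "m b y = m b (sc (cA y) a + sc (cB y) b + cZ y + cW y)"
      by (subst coord_dec[of y], rule refl)+
  then show "m a y = sc (cA y) a + sc \<eta> (cW y)" "m b y = sc (cB y) b + sc \<eta> (cW y)"
    by (simp_all add: m_add_right m_scale_right cZ_mem)
qed

lemma mult_a_right: "m y a = sc (cA y) a + sc \<eta> (cW y)"
  and mult_b_right: "m y b = sc (cB y) b + sc \<eta> (cW y)"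
  using mult_a_left[of y] mult_b_left[of y] m_commute[of y] by simp_all

lemma axis_coords_idem: assumes axy: "axis y"
  defines "\<alpha> \<equiv> cA y" and "\<beta> \<equiv> cB y" and "z \<equiv> cZ y" and "w \<equiv> cW y"
  shows "\<alpha> * \<alpha> + cA (m w w) = \<alpha>" "\<beta> * \<beta> + cB (m w w) = \<beta>" "m z z + cZ (m w w) = z"
    "m z w = sc (1/2 - (\<alpha> + \<beta>) * \<eta>) w" "m w z = sc (1/2 - (\<alpha> + \<beta>) * \<eta>) w"
proof -
  have hy: "y = sc \<alpha> a + sc \<beta> b + z + w" unfolding assms by (rule coord_dec)
  have zZ: "z \<in> Z" and wW: "w \<in> W" unfolding assms by (simp_all add: cZ_mem)
  note simps = zZ wW mult_table coord_lin coord_Z coord_W coord_basic Z_mult_closed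
    m_add_left m_add_right m_scale_left m_scale_right
  have yy: "m y y = m (sc \<alpha> a + sc \<beta> b + z + w) (sc \<alpha> a + sc \<beta> b + z + w)" using hy by simp
  have 1: "cA (m y y) = \<alpha>" "cB (m y y) = \<beta>" "cZ (m y y) = z" "cW (m y y) = w"
    using axis_idem[OF axy] assms by simp_all
  show "\<alpha> * \<alpha> + cA (m w w) = \<alpha>" "\<beta> * \<beta> + cB (m w w) = \<beta>" "m z z + cZ (m w w) = z"
    using 1(1-3) unfolding yy by (simp_all add: simps)
  have mwz: "m w z = m z w" by (rule m_commute)
  have "(sc (\<alpha> * \<eta>) w + sc (\<beta> * \<eta>) w + m z w) + (sc (\<alpha> * \<eta>) w + sc (\<beta> * \<eta>) w + m z w) = w"
    using 1(4) unfolding yy by (simp add: simps mwz algebra_simps)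
  then have "sc (\<alpha> * \<eta>) w + sc (\<beta> * \<eta>) w + m z w = sc (1/2) w" by (rule eq_scale_half)
  then have "m z w = sc (1/2) w - sc (\<alpha> * \<eta>) w - sc (\<beta> * \<eta>) w" by (simp add: algebra_simps)
  then show "m z w = sc (1/2 - (\<alpha> + \<beta>) * \<eta>) w" "m w z = sc (1/2 - (\<alpha> + \<beta>) * \<eta>) w"
    by (simp_all add: mwz algebra_simps scale_left_diff_distrib scale_left_distrib)
qed

text \<open>The quadratic relation of \<open>y\<close> applied to \<open>a\<close> and to \<open>b\<close>; by \<open>coef_sym\<close> the
  coefficients \<open>\<phi>\<^sub>y(a)\<close> and \<open>\<phi>\<^sub>y(b)\<close> are the coordinates of \<open>y\<close>.\<close>
lemma axis_coords_quadratic: assumes axy: "axis y" and y0: "y \<noteq> 0"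
  defines "\<alpha> \<equiv> cA y" and "\<beta> \<equiv> cB y" and "z \<equiv> cZ y" and "w \<equiv> cW y"
  shows "\<eta> * cB (m w w) = (1 - \<eta>) * \<alpha> * \<beta>" "\<eta> * cA (m w w) = (1 - \<eta>) * \<beta> * \<alpha>"
    "sc \<eta> (cZ (m w w)) = sc ((1 - \<eta>) * \<alpha>) z" "sc \<eta> (cZ (m w w)) = sc ((1 - \<eta>) * \<beta>) z"
    "w \<noteq> 0 \<Longrightarrow> \<alpha> * \<eta> + \<eta> / 2 - \<eta> * \<eta> = (1 - \<eta>) * \<alpha>"
    "w \<noteq> 0 \<Longrightarrow> \<beta> * \<eta> + \<eta> / 2 - \<eta> * \<eta> = (1 - \<eta>) * \<beta>"
proof -
  have hy: "y = sc \<alpha> a + sc \<beta> b + z + w" unfolding assms by (rule coord_dec)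
  have zZ: "z \<in> Z" and wW: "w \<in> W" unfolding assms by (simp_all add: cZ_mem)
  note simps = zZ wW mult_table coord_lin coord_Z coord_W coord_basic Z_mult_closed
    m_add_left m_add_right m_scale_left m_scale_right
  note zw = axis_coords_idem(4)[OF axy, folded \<alpha>_def \<beta>_def z_def w_def]
  have coef_y: "coef y a = \<alpha>" "coef y b = \<beta>" unfolding assms cA_def cB_def
    using coef_sym[OF axy axa y0 a_nonzero] coef_sym[OF axy axb y0 b_nonzero] by simp_all
  have ya: "m y a = sc \<alpha> a + sc \<eta> w" and yb: "m y b = sc \<beta> b + sc \<eta> w"
    unfolding assms by (rule mult_a_right, rule mult_b_right)
  have yw: "m y w = sc ((\<alpha> + \<beta>) * \<eta>) w + m z w + m w w"
    unfolding hy by (simp add: simps scale_left_distrib distrib_right)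
  have "m y (m y a) = m y (sc \<alpha> a + sc \<eta> w)" using ya by (rule arg_cong)
  then have "m y (m y a) = sc \<alpha> (m y a) + sc \<eta> (m y w)" using ya
    by (simp add: m_add_right m_scale_right)
  then have Qa: "sc \<alpha> (sc \<alpha> a + sc \<eta> w) + sc \<eta> (sc ((\<alpha> + \<beta>) * \<eta>) w + sc (1/2 - (\<alpha> + \<beta>) * \<eta>) w + m w w)
      - sc \<eta> (sc \<alpha> a + sc \<eta> w) = sc ((1 - \<eta>) * \<alpha>) (sc \<alpha> a + sc \<beta> b + z + w)"
    using axis_quadratic[OF axy y0, of a] unfolding coef_y ya yw zw by (simp only: hy[symmetric])
  have "m y (m y b) = m y (sc \<beta> b + sc \<eta> w)" using yb by (rule arg_cong)
  then have "m y (m y b) = sc \<beta> (m y b) + sc \<eta> (m y w)" using yb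
    by (simp add: m_add_right m_scale_right)
  then have Qb: "sc \<beta> (sc \<beta> b + sc \<eta> w) + sc \<eta> (sc ((\<alpha> + \<beta>) * \<eta>) w + sc (1/2 - (\<alpha> + \<beta>) * \<eta>) w + m w w)
      - sc \<eta> (sc \<beta> b + sc \<eta> w) = sc ((1 - \<eta>) * \<beta>) (sc \<alpha> a + sc \<beta> b + z + w)"
    using axis_quadratic[OF axy y0, of b] unfolding coef_y yb yw zw by (simp only: hy[symmetric])
  show "\<eta> * cB (m w w) = (1 - \<eta>) * \<alpha> * \<beta>" using arg_cong[OF Qa, of cB] by (simp add: simps)
  show "\<eta> * cA (m w w) = (1 - \<eta>) * \<beta> * \<alpha>" using arg_cong[OF Qb, of cA] by (simp add: simps)
  show "sc \<eta> (cZ (m w w)) = sc ((1 - \<eta>) * \<alpha>) z" using arg_cong[OF Qa, of cZ] by (simp add: simps)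
  show "sc \<eta> (cZ (m w w)) = sc ((1 - \<eta>) * \<beta>) z" using arg_cong[OF Qb, of cZ] by (simp add: simps)
  have "sc (\<alpha> * \<eta> + \<eta> / 2 - \<eta> * \<eta>) w = sc ((1 - \<eta>) * \<alpha>) w"
    using arg_cong[OF Qa, of cW] by (simp add: simps scale_left_distrib scale_left_diff_distrib)
  then show "w \<noteq> 0 \<Longrightarrow> \<alpha> * \<eta> + \<eta> / 2 - \<eta> * \<eta> = (1 - \<eta>) * \<alpha>" by simp
  have "sc (\<beta> * \<eta> + \<eta> / 2 - \<eta> * \<eta>) w = sc ((1 - \<eta>) * \<beta>) w"
    using arg_cong[OF Qb, of cW] by (simp add: simps scale_left_distrib scale_left_diff_distrib)
  then show "w \<noteq> 0 \<Longrightarrow> \<beta> * \<eta> + \<eta> / 2 - \<eta> * \<eta> = (1 - \<eta>) * \<beta>" by simp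
qed

lemma eta_eq_half: assumes axc: "axis c" and c0: "c \<noteq> 0" and ac: "m a c \<noteq> 0" and ca: "c \<noteq> a"
  shows "\<eta> = 1/2"
proof -
  define \<alpha> \<beta> z w where "\<alpha> = cA c" "\<beta> = cB c" "z = cZ c" "w = cW c"
  note idem = axis_coords_idem[OF axc, folded \<alpha>_\<beta>_z_w_def]
  note quad = axis_coords_quadratic[OF axc c0, folded \<alpha>_\<beta>_z_w_def]
  show ?thesis
  proof (cases "w = 0")
    case True
    have "m a c = sc \<alpha> a" using mult_a_left[of c] True \<alpha>_\<beta>_z_w_def by simp
    then have "\<alpha> \<noteq> 0" using ac by auto
    moreover have "\<alpha> * \<alpha> = \<alpha>" using idem(1) True by (simp add: m_zero_left)
    ultimately have \<alpha>1: "\<alpha> = 1" by (metis mult_cancel_right1)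
    have "(1 - \<eta>) * \<beta> = 0" using quad(1) True \<alpha>1 by (simp add: m_zero_left)
    then have "\<beta> = 0" using eta_neq_one by simp
    moreover have "sc ((1 - \<eta>) * \<alpha>) z = 0" using quad(3) True by (simp add: m_zero_left)
    then have "z = 0" using eta_neq_one \<alpha>1 by simp
    ultimately have "c = a" using coord_dec[of c] \<alpha>1 True unfolding \<alpha>_\<beta>_z_w_def[symmetric] by simp
    then show ?thesis using ca by simp
  next
    case False
    define h where "h = 1 / (2::'f)"
    have h: "h + h = 1" unfolding h_def by (rule half_add_half)
    have \<alpha>: "\<alpha> * \<eta> + \<eta> * h - \<eta> * \<eta> = (1 - \<eta>) * \<alpha>" and \<beta>: "\<beta> * \<eta> + \<eta> * h - \<eta> * \<eta> = (1 - \<eta>) * \<beta>"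
      using quad(5,6)[OF False] by (simp_all add: h_def)
    have "cA (m w w) = \<alpha> - \<alpha> * \<alpha>" using idem(1) by (simp add: algebra_simps)
    then have "\<eta> * (\<alpha> - \<alpha> * \<alpha>) = (1 - \<eta>) * \<beta> * \<alpha>" using quad(2) by simp
    then have "(1 - 2 * \<eta>) * (\<alpha> - \<eta> * h) = 0 \<and> (1 - 2 * \<eta>) * (\<beta> - \<eta> * h) = 0 \<and>
        (\<alpha> = \<eta> * h \<longrightarrow> \<beta> = \<eta> * h \<longrightarrow> \<eta> * \<eta> = 0)"
      using \<alpha> \<beta> h by algebra
    then have "1 - 2 * \<eta> = 0" using eta_nonzero by auto
    then show ?thesis using two_nonzero by (simp add: field_simps)
  qed
qed

subsection \<open>The case \<open>\<eta> = 1/2\<close>\<close>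

context assumes eta_half: "\<eta> = 1/2"
begin

lemma eta_add_eta: "\<eta> + \<eta> = 1"
  unfolding eta_half by (rule half_add_half)

lemma scale_eta_add_eta: "sc \<eta> v + sc \<eta> v = v"
  unfolding eta_half by (rule scale_half_add_half)

text \<open>Here \<open>y = z + w\<close> with \<open>yw = \<eta> w\<close>, while \<open>a - w\<close> and \<open>b - w\<close> lie in \<open>A\<^sub>0(y)\<close> and
  their product is \<open>- w\<close>; so \<open>w \<in> A\<^sub>0(y)\<close> as well.\<close>
lemma axis_zero_ab_coords: assumes axy: "axis y" and y0: "y \<noteq> 0" and "cA y = 0" "cB y = 0"
  shows "cW y = 0"
proof -
  define z w where "z = cZ y" "w = cW y"
  note idem = axis_coords_idem[OF axy, unfolded assms(3,4), folded z_w_def]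
  note quad = axis_coords_quadratic[OF axy y0, unfolded assms(3,4), folded z_w_def]
  have wW: "w \<in> W" unfolding z_w_def by simp
  have "cZ (m w w) = 0" using quad(3) eta_nonzero by simp
  then have ww0: "m w w = 0" using idem(1,2) wW by - (rule coord_inj, simp_all)
  have zw: "m z w = sc \<eta> w" using idem(4) by (simp add: eta_half[symmetric])
  have hy: "y = z + w" using coord_dec[of y] unfolding assms(3,4) z_w_def[symmetric] by simp
  have yw: "m y w = sc \<eta> w" unfolding hy using zw ww0 by (simp add: m_add_left)
  have "a - w \<in> Eig y 0" "b - w \<in> Eig y 0"
    unfolding mem_Eig using mult_a_right[of y] mult_b_right[of y] yw assms(3,4)
    by (simp_all add: m_diff_right z_w_def)
  then have "m (a - w) (b - w) \<in> Eig y 0" by (rule Eig0_mult_Eig0[OF axy])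
  moreover have "m (a - w) (b - w) = - (sc \<eta> w + sc \<eta> w)"
    using wW ww0 by (simp add: m_diff_left m_diff_right algebra_simps)
  ultimately have "m y w = 0" unfolding mem_Eig scale_eta_add_eta by (simp add: m_minus_right)
  then show ?thesis using yw eta_nonzero unfolding z_w_def by simp
qed

text \<open>If \<open>z \<noteq> 0\<close>, then \<open>z\<^sup>2 = \<eta> z\<close> and \<open>z\<close> lies in the \<open>\<eta>\<close>-eigenspace of \<open>y\<close>, contradicting the
  fusion rule \<open>A\<^sub>\<eta> A\<^sub>\<eta> \<subseteq> A\<^sub>+\<close>.\<close>
lemma axis_eta_ab_coords: assumes axy: "axis y" and y0: "y \<noteq> 0" and "cA y = \<eta>" "cB y = \<eta>"
  shows "cZ y = 0"
proof (rule ccontr)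
  define z w where "z = cZ y" "w = cW y"
  note idem = axis_coords_idem[OF axy, unfolded assms(3,4), folded z_w_def]
  note quad = axis_coords_quadratic[OF axy y0, unfolded assms(3,4), folded z_w_def]
  assume "cZ y \<noteq> 0"
  then have z0: "z \<noteq> 0" unfolding z_w_def .
  have hy: "y = sc \<eta> a + sc \<eta> b + z + w" using coord_dec[of y]
    unfolding assms(3,4) z_w_def[symmetric] .
  have zZ: "z \<in> Z" and wW: "w \<in> W" unfolding z_w_def by (simp_all add: cZ_mem)
  have "(\<eta> + \<eta>) * \<eta> = \<eta>" using eta_add_eta by simp
  then have "1/2 - (\<eta> + \<eta>) * \<eta> = 0" by (simp add: eta_half[symmetric])
  then have zw: "m z w = 0" "m w z = 0" using idem(4,5) by simp_all
  have "1 - \<eta> = \<eta>" using eta_add_eta by (metis add_diff_cancel_right')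
  then have "sc \<eta> (cZ (m w w)) = sc \<eta> (sc \<eta> z)" using quad(3) by simp
  then have "cZ (m w w) = sc \<eta> z" by (rule scale_left_imp_eq[OF eta_nonzero])
  then have "m z z + sc \<eta> z = sc \<eta> z + sc \<eta> z" using idem(3) by (simp only: scale_eta_add_eta)
  then have zz: "m z z = sc \<eta> z" by (simp only: add_right_cancel)
  have "m y z = sc \<eta> z" unfolding hy using zz zw zZ by (simp add: m_add_left m_scale_left)
  then have zE: "z \<in> Eig y \<eta>" by (simp add: mem_Eig)
  then have "m z z \<in> Eig y \<eta>" unfolding zz by (rule Eig_scale)
  then have "proj_eta y (m z z) = m z z" using coords_Eig_eta[OF axy y0] by blast
  moreover have "proj_eta y (m z z) = 0" by (rule proj_eta_Eig_eta_mult[OF axy zE zE])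
  ultimately show False using zz z0 eta_nonzero by simp
qed

lemma axis_Z_free_or_in_Z: assumes axy: "axis y" and y0: "y \<noteq> 0"
  shows "cZ y = 0 \<or> y \<in> Z"
proof (cases "cZ y = 0")
  case z0: False
  define \<alpha> \<beta> where "\<alpha> = cA y" "\<beta> = cB y"
  note idem = axis_coords_idem[OF axy, folded \<alpha>_\<beta>_def]
  note quad = axis_coords_quadratic[OF axy y0, folded \<alpha>_\<beta>_def]
  have "sc ((1 - \<eta>) * \<alpha>) (cZ y) = sc ((1 - \<eta>) * \<beta>) (cZ y)" using quad(3) quad(4) by (rule subst)
  then have "(1 - \<eta>) * \<alpha> = (1 - \<eta>) * \<beta>" using z0 by simp
  then have \<alpha>\<beta>: "\<alpha> = \<beta>" using eta_neq_one by simp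
  have "cA (m (cW y) (cW y)) = \<alpha> - \<alpha> * \<alpha>" using idem(1) by (simp add: algebra_simps)
  then have "\<eta> * (\<alpha> - \<alpha> * \<alpha>) = (1 - \<eta>) * \<alpha> * \<alpha>" using quad(2) \<alpha>\<beta> by simp
  then have "\<eta> * \<alpha> - \<eta> * (\<alpha> * \<alpha>) = \<alpha> * \<alpha> - \<eta> * (\<alpha> * \<alpha>)" by (simp add: algebra_simps)
  then have "\<alpha> = 0 \<or> \<alpha> = \<eta>" by (auto simp: algebra_simps)
  then have "y \<in> Z"
  proof
    assume "\<alpha> = 0"
    then have "cA y = 0" "cB y = 0" "cW y = 0"
      using \<alpha>\<beta> axis_zero_ab_coords[OF axy y0] unfolding \<alpha>_\<beta>_def by auto
    then show "y \<in> Z" using coord_dec[of y] cZ_mem[of y] by simp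
  next
    assume "\<alpha> = \<eta>"
    then show "y \<in> Z" using \<alpha>\<beta> axis_eta_ab_coords[OF axy y0] z0 unfolding \<alpha>_\<beta>_def by simp
  qed
  then show ?thesis ..
qed simp

lemma Z_free_axis_coords: assumes axx: "axis x" and x0: "x \<noteq> 0" and xz: "cZ x = 0" and w0: "cW x \<noteq> 0"
  shows "cA x + cB x = 1" "m (cW x) (cW x) = sc (cA x * cB x) (a + b)"
proof -
  define \<alpha> \<beta> w where "\<alpha> = cA x" "\<beta> = cB x" "w = cW x"
  note idem = axis_coords_idem[OF axx, unfolded xz, folded \<alpha>_\<beta>_w_def]
  have wW: "w \<in> W" unfolding \<alpha>_\<beta>_w_def by simp
  have "sc (1/2 - (\<alpha> + \<beta>) * \<eta>) w = 0" using idem(4) by (simp add: m_zero_left)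
  then have "1/2 - (\<alpha> + \<beta>) * \<eta> = 0" using w0 unfolding \<alpha>_\<beta>_w_def by simp
  then have "(\<alpha> + \<beta>) * \<eta> = 1 * \<eta>" by (simp add: eta_half[symmetric])
  then show ab1: "cA x + cB x = 1" using eta_nonzero unfolding \<alpha>_\<beta>_w_def
    by (simp only: mult_cancel_right) simp
  have \<beta>1: "\<beta> = 1 - \<alpha>" and \<alpha>1: "\<alpha> = 1 - \<beta>" using ab1 unfolding \<alpha>_\<beta>_w_def
    by (simp_all add: algebra_simps)
  have "cA (m w w) = \<alpha> * \<beta>" using idem(1) unfolding \<beta>1 by (simp add: algebra_simps)
  moreover have "cB (m w w) = \<alpha> * \<beta>" using idem(2) unfolding \<alpha>1 by (simp add: algebra_simps)
  moreover have "cZ (m w w) = 0" using idem(3) by (simp add: m_zero_left)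
  ultimately show "m (cW x) (cW x) = sc (cA x * cB x) (a + b)"
    unfolding \<alpha>_\<beta>_w_def[symmetric] using wW by - (rule coord_inj, simp_all add: scale_right_distrib)
qed

text \<open>Compare \<open>W\<close>-components in the quadratic relation of \<open>x\<close> applied to \<open>y\<close>.\<close>
lemma Z_free_axis_W_mult: assumes axx: "axis x" and x0: "x \<noteq> 0" and xz: "cZ x = 0"
  and w0: "cW x \<noteq> 0" and yZ: "y \<in> Z"
  shows "m x (m y (cW x)) = sc \<eta> (m y (cW x))" "m (cW x) (m y (cW x)) = 0"
proof -
  define \<alpha> \<beta> w where "\<alpha> = cA x" "\<beta> = cB x" "w = cW x"
  have hx: "x = sc \<alpha> a + sc \<beta> b + w" using coord_dec[of x] xz unfolding \<alpha>_\<beta>_w_def by simp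
  have wW: "w \<in> W" unfolding \<alpha>_\<beta>_w_def by simp
  have ab1: "\<alpha> + \<beta> = 1" using Z_free_axis_coords(1)[OF axx x0 xz w0] unfolding \<alpha>_\<beta>_w_def .
  define v where "v = m y w"
  have vW: "v \<in> W" unfolding v_def using yZ wW by simp
  have xy: "m x y = v" unfolding hx v_def using yZ
    by (simp add: m_add_left m_scale_left m_commute[of w y])
  have "m x v = sc (\<alpha> * \<eta>) v + sc (\<beta> * \<eta>) v + m w v" unfolding hx using vW
    by (simp add: m_add_left m_scale_left)
  then have xv: "m x v = sc \<eta> v + m w v" using ab1
    by (simp add: scale_left_distrib[symmetric] distrib_right[symmetric])
  have wv: "m w v = sc ((1 - \<eta>) * coef x y) x"
    using axis_quadratic[OF axx x0, of y] unfolding xy xv by simp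
  moreover have "cW (m w v) = 0" using wW vW by simp
  ultimately have "sc ((1 - \<eta>) * coef x y) w = 0" using \<alpha>_\<beta>_w_def by simp
  then have "(1 - \<eta>) * coef x y = 0" using w0 unfolding \<alpha>_\<beta>_w_def by simp
  then show "m (cW x) (m y (cW x)) = 0" using wv unfolding v_def \<alpha>_\<beta>_w_def by simp
  then show "m x (m y (cW x)) = sc \<eta> (m y (cW x))" using xv unfolding v_def \<alpha>_\<beta>_w_def by simp
qed

text \<open>With \<open>v = yw\<close>, both \<open>y - 2v\<close> and \<open>\<beta> a + \<alpha> b - w\<close> lie in \<open>A\<^sub>0(x)\<close>, while their
  product has \<open>x\<close>-image \<open>-v\<close>.\<close>
lemma Z_free_axis_mult_Z: assumes axx: "axis x" and x0: "x \<noteq> 0" and xz: "cZ x = 0" and yZ: "y \<in> Z"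
  shows "m x y = 0"
proof -
  define \<alpha> \<beta> w where "\<alpha> = cA x" "\<beta> = cB x" "w = cW x"
  have hx: "x = sc \<alpha> a + sc \<beta> b + w" using coord_dec[of x] xz unfolding \<alpha>_\<beta>_w_def by simp
  have wW: "w \<in> W" unfolding \<alpha>_\<beta>_w_def by simp
  show ?thesis
  proof (cases "w = 0")
    case True
    then show ?thesis unfolding hx using yZ by (simp add: m_add_left m_scale_left)
  next
    case False
    then have ab1: "\<alpha> + \<beta> = 1" and ww: "m w w = sc (\<alpha> * \<beta>) a + sc (\<alpha> * \<beta>) b"
      using Z_free_axis_coords[OF axx x0 xz] unfolding \<alpha>_\<beta>_w_def by (auto simp: scale_right_distrib)
    define v where "v = m y w"
    have vW: "v \<in> W" unfolding v_def using yZ wW by simp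
    have xy: "m x y = v" unfolding hx v_def using yZ
      by (simp add: m_add_left m_scale_left m_commute[of w y])
    have xv: "m x v = sc \<eta> v" and wv0: "m w v = 0"
      using Z_free_axis_W_mult[OF axx x0 xz _ yZ] False unfolding v_def \<alpha>_\<beta>_w_def by auto
    define t where "t = sc \<beta> a + sc \<alpha> b - w"
    have "m x t = sc (\<alpha> * \<beta>) a + sc (\<alpha> * \<beta>) b - m w w" unfolding hx t_def using wW
      by (simp add: m_add_left m_add_right m_scale_left m_scale_right m_diff_left m_diff_right algebra_simps)
    then have tE: "t \<in> Eig x 0" unfolding mem_Eig ww by simp
    have "m x (y - (v + v)) = v - (sc \<eta> v + sc \<eta> v)" using xy xv by (simp add: m_diff_right m_add_right)
    then have sE: "y - (v + v) \<in> Eig x 0" unfolding mem_Eig scale_eta_add_eta by simp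
    have "m y t = - v" unfolding t_def v_def using yZ wW
      by (simp add: m_diff_right m_add_right m_scale_right)
    moreover have "m v t = sc \<beta> (sc \<eta> v) + sc \<alpha> (sc \<eta> v) - m w v"
      unfolding t_def using vW by (simp add: m_diff_right m_add_right m_scale_right m_commute[of v w])
    then have "m v t = sc \<eta> v" using wv0 ab1
      by (simp add: scale_left_distrib[symmetric] add.commute distrib_right[symmetric])
    then have "m (v + v) t = v" by (simp add: m_add_left scale_eta_add_eta)
    ultimately have "m (y - (v + v)) t = - v - v" by (simp add: m_diff_left)
    moreover have "m x (- v - v) = - v"
      using xv scale_eta_add_eta[of v] by (simp add: m_diff_right m_minus_right algebra_simps)
    moreover have "m (y - (v + v)) t \<in> Eig x 0" by (rule Eig0_mult_Eig0[OF axx sE tE])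
    ultimately have "v = 0" unfolding mem_Eig by simp
    then show ?thesis using xy by simp
  qed
qed

lemma Z_free_neighbour: assumes axx: "axis x" and x0: "x \<noteq> 0" and xz: "cZ x = 0"
  and axy: "axis y" and xy: "m x y \<noteq> 0" shows "cZ y = 0"
proof -
  have y0: "y \<noteq> 0" using xy by (auto simp: m_zero_right)
  then show ?thesis using axis_Z_free_or_in_Z[OF axy y0] Z_free_axis_mult_Z[OF axx x0 xz] xy by blast
qed

lemma tau_Z_free: assumes axx: "axis x" and x0: "x \<noteq> 0" and xz: "cZ x = 0"
  and axy: "axis y" and yz: "cZ y = 0" shows "cZ (tau x y) = 0"
proof (rule ccontr)
  assume ne: "cZ (tau x y) \<noteq> 0"
  have ax': "axis (tau x y)" by (rule tau_axis[OF axx x0 axy])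
  have y'0: "tau x y \<noteq> 0" using ne by auto
  have "tau x y \<in> Z" using axis_Z_free_or_in_Z[OF ax' y'0] ne by blast
  then have "m x (tau x y) = 0" by (rule Z_free_axis_mult_Z[OF axx x0 xz])
  then have "tau x y \<in> Eig x 0" by (simp add: mem_Eig)
  then have "tau x (tau x y) = tau x y"
    using tau_plus_minus[OF axx, of "tau x y" 0] Eig_zero unfolding Aplus_def by force
  then have "y = tau x y" using tau_tau[OF axx] by simp
  then show False using ne yz by simp
qed

end

end

locale connected_generated = equal_miyamoto_pair sc m \<eta> a b
  for sc :: "'f::field \<Rightarrow> 'v::ab_group_add \<Rightarrow> 'v" and m \<eta> a b +
  fixes A :: "'v set"
  assumes axes: "\<forall>x\<in>A. axis x" and gen: "generated sc m A = UNIV" and conn: "delta_connected m A"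
    and a_in_A: "a \<in> A" and b_in_A: "b \<in> A"
begin

abbreviation adjacent where "adjacent u v \<equiv> u \<in> A \<and> v \<in> A \<and> u \<noteq> v \<and> m u v \<noteq> 0"

lemma eta_half: "\<eta> = 1/2"
proof -
  have "adjacent\<^sup>*\<^sup>* a b" using conn a_in_A b_in_A unfolding delta_connected_def by blast
  then obtain c where "adjacent a c" using ab by (cases rule: converse_rtranclpE) auto
  then show ?thesis using eta_eq_half axes m_zero_right by metis
qed

lemma generator_Z_free: assumes "x \<in> A" shows "cZ x = 0"
proof -
  have "adjacent\<^sup>*\<^sup>* a x" using conn a_in_A assms unfolding delta_connected_def by blast
  then show "cZ x = 0"
  proof (induct rule: rtranclp_induct)
    case (step u v)
    then have "u \<noteq> 0" by (auto simp: m_zero_left)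
    then show ?case using Z_free_neighbour[OF eta_half] step axes by blast
  qed simp
qed

definition "Z_free_axes = {x. axis x \<and> cZ x = 0}"

lemma Z_free_axes_mult: "x \<in> Z_free_axes \<Longrightarrow> y \<in> Z_free_axes \<Longrightarrow> m x y \<in> span Z_free_axes"
proof -
  assume x: "x \<in> Z_free_axes" and y: "y \<in> Z_free_axes"
  show ?thesis
  proof (cases "x = 0")
    case True then show ?thesis by (simp add: m_zero_left span_zero)
  next
    case False
    have axx: "axis x" and xz: "cZ x = 0" and axy: "axis y" and yz: "cZ y = 0"
      using x y by (auto simp: Z_free_axes_def)
    have "tau x y \<in> Z_free_axes"
      unfolding Z_free_axes_def
      using tau_axis[OF axx False axy] tau_Z_free[OF eta_half axx False xz axy yz] by simp
    then have "tau x y \<in> span Z_free_axes" "x \<in> span Z_free_axes" "y \<in> span Z_free_axes"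
      using x y by (auto intro: span_base)
    then show ?thesis unfolding axis_mult_tau[OF axx False] by (intro span_add span_scale span_diff)
  qed
qed

lemma span_Z_free_axes: "span Z_free_axes = UNIV"
proof -
  have "subalgebra sc m (span Z_free_axes)" unfolding subalgebra_def
    using span_zero span_add span_scale span_mult_closed[OF Z_free_axes_mult] by blast
  moreover have "A \<subseteq> span Z_free_axes"
    using axes generator_Z_free by (auto simp: Z_free_axes_def intro: span_base)
  ultimately have "generated sc m A \<subseteq> span Z_free_axes" unfolding generated_def by blast
  then show ?thesis using gen by blast
qed

lemma cZ_eq_zero: "cZ x = 0"
proof -
  have "subspace {x. cZ x = 0}" unfolding subspace_def by simp
  then have "span Z_free_axes \<subseteq> {x. cZ x = 0}" by (intro span_minimal) (auto simp: Z_free_axes_def)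
  then show ?thesis using span_Z_free_axes by blast
qed

lemma coords_decomp: "x = sc (cA x) a + sc (cB x) b + cW x"
  using coord_dec[of x] cZ_eq_zero[of x] by simp

lemma unit_left: "m (a + b) x = x"
proof -
  have "m (a + b) x = sc (cA x) a + sc (cB x) b + (sc \<eta> (cW x) + sc \<eta> (cW x))"
    using mult_a_left mult_b_left by (simp add: m_add_left algebra_simps)
  also have "\<dots> = x" by (simp only: scale_eta_add_eta[OF eta_half]) (rule coords_decomp[symmetric])
  finally show ?thesis .
qed

lemma unit_right: "m x (a + b) = x"
  using unit_left m_commute by metis

text \<open>For an axis \<open>x = \<alpha> a + \<beta> b + w\<close> and \<open>w'\<close> in \<open>W\<close>, write \<open>ww' = p a + q b\<close>; the
  quadratic relation of \<open>x\<close> applied to \<open>w'\<close> gives \<open>p \<alpha> = k \<alpha>\<close>, \<open>q \<beta> = k \<beta>\<close> and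
  \<open>k = (p + q) \<eta>\<close>, whence \<open>p = q\<close> since \<open>\<alpha> + \<beta> = 1\<close>.\<close>
lemma cA_axis_W_mult_eq_cB: assumes axx: "axis x" and xz: "cZ x = 0" and w'W: "w' \<in> W"
  shows "cA (m (cW x) w') = cB (m (cW x) w')"
proof (cases "x = 0 \<or> cW x = 0")
  case True
  then show ?thesis by (auto simp: m_zero_left)
next
  case False
  then have x0: "x \<noteq> 0" and w0: "cW x \<noteq> 0" by auto
  define \<alpha> \<beta> w where "\<alpha> = cA x" "\<beta> = cB x" "w = cW x"
  have hx: "x = sc \<alpha> a + sc \<beta> b + w" using coords_decomp[of x] unfolding \<alpha>_\<beta>_w_def by simp
  have wW: "w \<in> W" and w0': "w \<noteq> 0" using w0 unfolding \<alpha>_\<beta>_w_def by simp_all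
  have ab1: "\<alpha> + \<beta> = 1" using Z_free_axis_coords(1)[OF eta_half axx x0 xz w0] unfolding \<alpha>_\<beta>_w_def .
  define p q where "p = cA (m w w')" "q = cB (m w w')"
  have mww: "m w w' = sc p a + sc q b" using coords_decomp[of "m w w'"] wW w'W unfolding p_q_def
    by simp
  have xw: "m x w' = sc \<eta> w' + (sc p a + sc q b)"
  proof -
    have "m x w' = sc (\<alpha> * \<eta>) w' + sc (\<beta> * \<eta>) w' + m w w'"
      unfolding hx using w'W by (simp add: m_add_left m_scale_left)
    then show ?thesis using ab1 mww
      by (simp add: scale_left_distrib[symmetric] distrib_right[symmetric])
  qed
  define k where "k = (1 - \<eta>) * coef x w'"
  have "m x (m x w') = m x (sc \<eta> w' + (sc p a + sc q b))" using xw by (rule arg_cong)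
  then have "m x (m x w') = sc \<eta> (m x w') + (sc p (m x a) + sc q (m x b))"
    by (simp add: m_add_right m_scale_right)
  then have "sc p (m x a) + sc q (m x b) = sc k x" using axis_quadratic[OF axx x0, of w']
    unfolding k_def by simp
  then have Q: "sc p (sc \<alpha> a + sc \<eta> w) + sc q (sc \<beta> b + sc \<eta> w) = sc k (sc \<alpha> a + sc \<beta> b + w)"
    using hx mult_a_right[of x] mult_b_right[of x] unfolding \<alpha>_\<beta>_w_def by simp
  have "p * \<alpha> = k * \<alpha>" "q * \<beta> = k * \<beta>" using arg_cong[OF Q, of cA] arg_cong[OF Q, of cB] wW
    by (simp_all add: mult.commute)
  moreover have "sc ((p + q) * \<eta>) w = sc k w"
    using arg_cong[OF Q, of cW] wW by (simp add: distrib_right scale_left_distrib)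
  then have "k = (p + q) * \<eta>" using w0' by simp
  ultimately have "p = q" using eta_add_eta[OF eta_half] ab1 by algebra
  then show ?thesis unfolding p_q_def \<alpha>_\<beta>_w_def by simp
qed

lemma cA_W_mult_eq_cB: assumes "w \<in> W" "w' \<in> W" shows "cA (m w w') = cB (m w w')"
proof -
  have "\<forall>w'\<in>W. cA (m (cW x) w') = cB (m (cW x) w')" if "x \<in> span Z_free_axes" for x
    using that
  proof (induct rule: span_induct)
    case base show ?case unfolding subspace_def by (simp add: m_add_left m_scale_left m_zero_left)
  next
    case (step x) then show ?case using cA_axis_W_mult_eq_cB by (auto simp: Z_free_axes_def)
  qed
  then have "\<forall>w'\<in>W. cA (m (cW w) w') = cB (m (cW w) w')" using span_Z_free_axes by blast
  then show ?thesis using assms by simp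
qed

subsection \<open>The Clifford structure\<close>

definition "V = {x. cA x + cB x = 0}"
definition "Bform u v = cA (m u v)"
definition "clifford_iso p = sc (fst p) (a + b) + snd p"

lemma V_mult: assumes "u \<in> V" "v \<in> V" shows "m u v = sc (Bform u v) (a + b)"
proof -
  define \<alpha> \<alpha>' w w' where "\<alpha> = cA u" "\<alpha>' = cA v" "w = cW u" "w' = cW v"
  have "cB u = - \<alpha>" "cB v = - \<alpha>'" using assms unfolding V_def \<alpha>_\<alpha>'_w_w'_def
    by (simp_all add: eq_neg_iff_add_eq_0 add.commute)
  then have "u = sc \<alpha> a + sc (- \<alpha>) b + w" "v = sc \<alpha>' a + sc (- \<alpha>') b + w'"
    using coords_decomp[of u] coords_decomp[of v] unfolding \<alpha>_\<alpha>'_w_w'_def by simp_all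
  then have muv: "m u v = m (sc \<alpha> a + sc (- \<alpha>) b + w) (sc \<alpha>' a + sc (- \<alpha>') b + w')" by simp
  have wW: "w \<in> W" "w' \<in> W" unfolding \<alpha>_\<alpha>'_w_w'_def by simp_all
  note simps = m_add_left m_add_right m_scale_left m_scale_right m_diff_left m_diff_right
  show ?thesis
  proof (rule coord_inj)
    show "cA (m u v) = cA (sc (Bform u v) (a + b))" by (simp add: Bform_def)
    show "cB (m u v) = cB (sc (Bform u v) (a + b))"
      unfolding Bform_def muv using wW cA_W_mult_eq_cB[OF wW] by (simp add: simps)
    show "cZ (m u v) = cZ (sc (Bform u v) (a + b))" using cZ_eq_zero by simp
    show "cW (m u v) = cW (sc (Bform u v) (a + b))" unfolding muv using wW by (simp add: simps)
  qed
qed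

lemma clifford_iso_mult: assumes "u \<in> V" "v \<in> V"
  shows "clifford_iso (Jprod sc Bform (c, u) (d, v)) = m (clifford_iso (c, u)) (clifford_iso (d, v))"
proof -
  define e where "e = a + b"
  have ee: "m e e = e" and ev: "m e v = v" and ue: "m u e = u" and uv: "m u v = sc (Bform u v) e"
    unfolding e_def using unit_left unit_right V_mult[OF assms] by auto
  have "m (clifford_iso (c, u)) (clifford_iso (d, v)) = m (sc c e + u) (sc d e + v)"
    by (simp add: clifford_iso_def e_def)
  also have "\<dots> = sc (c * d) e + sc c v + sc d u + sc (Bform u v) e"
    by (simp add: m_add_left m_add_right m_scale_left m_scale_right ee ev ue uv algebra_simps)
  also have "\<dots> = clifford_iso (Jprod sc Bform (c, u) (d, v))"
    by (simp add: clifford_iso_def Jprod_def e_def[symmetric] scale_left_distrib algebra_simps)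
  finally show ?thesis by simp
qed

lemma clifford_iso_bij: "bij_betw clifford_iso (UNIV \<times> V) UNIV"
  unfolding bij_betw_def
proof
  show "inj_on clifford_iso (UNIV \<times> V)"
  proof (rule inj_onI)
    fix p q assume p: "p \<in> UNIV \<times> V" and q: "q \<in> UNIV \<times> V" and e: "clifford_iso p = clifford_iso q"
    obtain c u d v where pq: "p = (c, u)" "q = (d, v)" by (cases p, cases q) auto
    have uv: "cA u + cB u = 0" "cA v + cB v = 0" using p q pq by (auto simp: V_def)
    have e': "sc c (a + b) + u = sc d (a + b) + v" using e pq by (simp add: clifford_iso_def)
    have "(c + cA u) + (c + cB u) = (d + cA v) + (d + cB v)"
      using arg_cong[OF e', of cA] arg_cong[OF e', of cB] by simp
    then have "2 * c = 2 * d" using uv by (simp add: algebra_simps mult_2)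
    then have "c = d" using two_nonzero by simp
    then show "p = q" using e' pq by simp
  qed
  show "clifford_iso ` (UNIV \<times> V) = UNIV"
  proof (intro set_eqI iffI)
    fix x
    define c where "c = (cA x + cB x) / 2"
    have "c + c = cA x + cB x" unfolding c_def mult_2[symmetric] using two_nonzero by simp
    then have "(c, x - sc c (a + b)) \<in> UNIV \<times> V" by (simp add: V_def algebra_simps)
    moreover have "clifford_iso (c, x - sc c (a + b)) = x" by (simp add: clifford_iso_def)
    ultimately show "x \<in> clifford_iso ` (UNIV \<times> V)" by (metis image_eqI)
  qed simp
qed

lemma clifford: "clifford_type sc m"
  unfolding clifford_type_def
proof (intro exI conjI)
  show "subspace V" unfolding subspace_def V_def
    by (auto simp: algebra_simps distrib_left[symmetric])
  show "sym_bilinear_on sc V Bform" unfolding sym_bilinear_on_def Bform_def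
    by (simp add: m_add_left m_scale_left) (metis m_commute)
  show "bij_betw clifford_iso (UNIV \<times> V) UNIV" by (rule clifford_iso_bij)
  show "\<forall>p\<in>UNIV \<times> V. \<forall>q\<in>UNIV \<times> V. clifford_iso (fst p + fst q, snd p + snd q) = clifford_iso p + clifford_iso q"
    by (simp add: clifford_iso_def scale_left_distrib algebra_simps)
  show "\<forall>c. \<forall>p\<in>UNIV \<times> V. clifford_iso (c * fst p, sc c (snd p)) = sc c (clifford_iso p)"
    by (simp add: clifford_iso_def scale_right_distrib)
  show "\<forall>p\<in>UNIV \<times> V. \<forall>q\<in>UNIV \<times> V. clifford_iso (Jprod sc Bform p q) = m (clifford_iso p) (clifford_iso q)"
    using clifford_iso_mult by auto
qed

end

theorem theoremB:
  fixes sc :: "'f::field \<Rightarrow> 'v::ab_group_add \<Rightarrow> 'v"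
    and m :: "'v \<Rightarrow> 'v \<Rightarrow> 'v"
    and \<eta> :: 'f
    and \<A> :: "'v set"
    and a b :: 'v
  assumes char: "(2::'f) \<noteq> 0"
    and eta: "\<eta> \<noteq> 0" "\<eta> \<noteq> 1"
    and alg: "primitive_axial_jordan sc m \<eta>"
    and axes: "\<forall>x\<in>\<A>. is_axis sc m \<eta> x"
    and gen: "generated sc m \<A> = UNIV"
    and conn: "delta_connected m \<A>"
    and ab: "a \<in> \<A>" "b \<in> \<A>" "a \<noteq> b"
    and tau: "miyamoto sc m \<eta> a = miyamoto sc m \<eta> b" "miyamoto sc m \<eta> a \<noteq> id"
  shows "\<eta> = 1 / 2 \<and> (\<forall>x. m (a + b) x = x \<and> m x (a + b) = x) \<and> clifford_type sc m"
proof -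
  interpret axial_jordan sc m \<eta>
    using alg char eta by unfold_locales (simp_all add: primitive_axial_jordan_def)
  have axa: "axis a" and axb: "axis b" using axes ab by auto
  interpret connected_generated sc m \<eta> a b \<A>
    using axa axb ab axes gen conn tau miyamoto_eq_tau[OF axa] miyamoto_eq_tau[OF axb]
    by unfold_locales auto
  show ?thesis using eta_half unit_left unit_right clifford by blast
qed

end
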